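(* As formal power series, $F(z)=B(zF(z)^2)$ and $R(z,q)=B(zR(z,q)^2,q)$, where $F(z)=\sum_{n\ge0}n!\,z^n$, $B(z)=\sum_{n\ge0}b_nz^n$, $R(z,q)=\sum_{n,k\ge0}r_{n,k}z^nq^k$ and $B(z,q)=\sum_{n,k\ge0}b_{n,k}z^nq^k$.
   Context: A pairing of $[2n]$ is a partition of $[2n]=\{1,\dots,2n\}$ into $n$ two-element blocks. Two blocks $\{a,b\}$ ($a<b$) and $\{c,d\}$ ($c<d$) cross if $a<c<b<d$ or $c<a<d<b$. A pairing is parity-reversing if every block contains one odd and one even integer. $r_{n,k}$ denotes the number of parity-reversing pairings of $[2n]$ with exactly $k$ crossings, with the convention $r_{0,0}=1$, $r_{0,k}=0$ for $k>0$. A parity-reversing pairing of $[2n]$ ($n\ge1$) is connected if there is no partition of its set of blocks into two nonempty subsets $C_1,C_2$ such that no block of $C_1$ crosses a block of $C_2$. $b_{n,k}$ is the number of connected parity-reversing pairings of $[2n]$ with exactly $k$ crossings and $b_n=\sum_k b_{n,k}$, with conventions $b_0=b_{0,0}=1$, $b_{0,k}=0$ for $k>0$. *)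

theory Defs
  imports "HOL-Computational_Algebra.Formal_Power_Series"
begin

definition pairing :: "nat \<Rightarrow> nat set set \<Rightarrow> bool" where
  "pairing n P \<longleftrightarrow> (\<forall>b\<in>P. card b = 2) \<and> \<Union>P = {1..2*n}
      \<and> (\<forall>b\<in>P. \<forall>c\<in>P. b \<noteq> c \<longrightarrow> b \<inter> c = {})"

definition parity_reversing :: "nat set set \<Rightarrow> bool" where
  "parity_reversing P \<longleftrightarrow> (\<forall>b\<in>P. \<exists>x\<in>b. \<exists>y\<in>b. odd x \<and> even y)"

definition crosses :: "nat set \<Rightarrow> nat set \<Rightarrow> bool" where
  "crosses x y \<longleftrightarrow>
     (Min x < Min y \<and> Min y < Max x \<and> Max x < Max y) \<or>
     (Min y < Min x \<and> Min x < Max y \<and> Max y < Max x)"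

text \<open>Number of crossings: unordered crossing pairs, each counted once
  (ordered by the smaller left endpoint).\<close>
definition crossings :: "nat set set \<Rightarrow> nat" where
  "crossings P = card {(x, y). x \<in> P \<and> y \<in> P \<and> Min x < Min y \<and> crosses x y}"

definition connected_pairing :: "nat set set \<Rightarrow> bool" where
  "connected_pairing P \<longleftrightarrow>
     \<not> (\<exists>C1 C2. C1 \<noteq> {} \<and> C2 \<noteq> {} \<and> C1 \<union> C2 = P \<and> C1 \<inter> C2 = {}
            \<and> (\<forall>x\<in>C1. \<forall>y\<in>C2. \<not> crosses x y))"

definition r_nk :: "nat \<Rightarrow> nat \<Rightarrow> nat" where
  "r_nk n k = card {P. pairing n P \<and> parity_reversing P \<and> crossings P = k}"

definition b_nk :: "nat \<Rightarrow> nat \<Rightarrow> nat" where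
  "b_nk n k = (if n = 0 then (if k = 0 then 1 else 0) else
     card {P. pairing n P \<and> parity_reversing P \<and> connected_pairing P \<and> crossings P = k})"

definition b_n :: "nat \<Rightarrow> nat" where
  "b_n n = (if n = 0 then 1 else
     card {P. pairing n P \<and> parity_reversing P \<and> connected_pairing P})"

definition F_fps :: "int fps" where
  "F_fps = Abs_fps (\<lambda>n. int (fact n))"

definition B_fps :: "int fps" where
  "B_fps = Abs_fps (\<lambda>n. int (b_n n))"

text \<open>Bivariate series in z and q as power series in z whose coefficients are
  power series in q:  Z[[q]][[z]].\<close>
definition R_fps :: "int fps fps" where
  "R_fps = Abs_fps (\<lambda>n. Abs_fps (\<lambda>k. int (r_nk n k)))"

definition B2_fps :: "int fps fps" where
  "B2_fps = Abs_fps (\<lambda>n. Abs_fps (\<lambda>k. int (b_nk n k)))"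

end

theory Submission
  imports Defs
begin

(* Both equations come from one bijective decomposition.  For a nonempty
   parity-reversing pairing P of [2n], let K ("root") be the connected component,
   under the crossing relation, of the block containing 1, and let
   a_1 < ... < a_{2i} be the points covered by K; put a_{2i+1} = 2n+1.  No other
   block can straddle a point of K (it would then be linked to K), so every other
   block lies in one of the 2i gaps between consecutive a_j.  Relabelling
   order-preservingly, K becomes a connected parity-reversing pairing C of [2i] and
   the blocks of the j-th gap become an arbitrary parity-reversing pairing P_j of
   [2 m_j], with i + m_1 + ... + m_{2i} = n.  The map decompose: P -> (i, C, [P_j])
   is inverted by glue, and crossings(P) = crossings(C) + sum_j crossings(P_j).

   It then shows that any such
   decomposition, for a weight phi that turns sums of crossing numbers into
   products, yields S_phi = T_phi o (z S_phi^2), where S_phi and T_phi are the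
   phi-weighted generating series of all and of connected parity-reversing
   pairings (functional_equation_from_decomposition). *)

unbundle fps_syntax

definition block_family :: "nat set set \<Rightarrow> bool" where
  "block_family P \<longleftrightarrow> (\<forall>b\<in>P. card b = 2) \<and> (\<forall>b\<in>P. \<forall>c\<in>P. b \<noteq> c \<longrightarrow> b \<inter> c = {})"

lemma pairing_iff: "pairing n P \<longleftrightarrow> block_family P \<and> \<Union>P = {1..2*n}"
  unfolding pairing_def block_family_def by blast

lemma card_2_Min_Max: assumes "card b = 2"
  shows "finite b" "b \<noteq> {}" "Min b < Max b" "b = {Min b, Max b}" "Min b \<in> b" "Max b \<in> b"
proof -
  obtain x y where b: "b = {x,y}" "x \<noteq> y" using assms by (auto simp: card_2_iff)
  show "finite b" "b \<noteq> {}" "Min b < Max b" "b = {Min b, Max b}" "Min b \<in> b" "Max b \<in> b"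
    using b by (auto simp: min_def max_def)
qed

lemma card_2_mem: assumes "card b = 2" "x \<in> b"
  shows "Min b \<le> x" "x \<le> Max b" "x = Min b \<or> x = Max b"
proof -
  show "Min b \<le> x" "x \<le> Max b" using assms card_2_Min_Max(1)[OF assms(1)] by auto
  show "x = Min b \<or> x = Max b" using assms card_2_Min_Max(4)[OF assms(1)] by blast
qed

lemma block_family_card: "block_family Q \<Longrightarrow> b \<in> Q \<Longrightarrow> card b = 2"
  unfolding block_family_def by (erule conjE) (erule bspec)

lemma block_family_nonempty_block: "block_family Q \<Longrightarrow> b \<in> Q \<Longrightarrow> \<exists>z. z \<in> b"
  using card_2_Min_Max(2)[OF block_family_card] by (metis ex_in_conv)

lemma block_family_finite: "block_family P \<Longrightarrow> finite (\<Union>P) \<Longrightarrow> finite P"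
  unfolding block_family_def by (metis finite_UnionD)

lemma card_Union_block_family: assumes "block_family P" "finite P"
  shows "card (\<Union>P) = 2 * card P"
proof -
  have "card (\<Union>P) = (\<Sum>b\<in>P. card b)"
    using assms by (intro card_Union_disjoint)
      (auto simp: block_family_def pairwise_def disjnt_def card_2_Min_Max)
  also have "\<dots> = (\<Sum>b\<in>P. 2)" using assms
    by (intro sum.cong) (auto simp: block_family_def)
  finally show ?thesis by simp
qed

lemma block_family_Un:
  assumes "block_family A" "block_family B" "\<Union>A \<inter> \<Union>B = {}"
  shows "block_family (A \<union> B)"
  unfolding block_family_def
proof (intro conjI ballI impI)
  fix b assume "b \<in> A \<union> B"
  then show "card b = 2" using assms(1,2) unfolding block_family_def by blast
next
  fix b c assume bc: "b \<in> A \<union> B" "c \<in> A \<union> B" "b \<noteq> c"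
  consider "b \<in> A" "c \<in> A" | "b \<in> B" "c \<in> B" | "b \<in> A" "c \<in> B" | "b \<in> B" "c \<in> A"
    using bc by blast
  then show "b \<inter> c = {}"
  proof cases
    case 1 then show ?thesis using assms(1) bc(3) unfolding block_family_def by blast
  next
    case 2 then show ?thesis using assms(2) bc(3) unfolding block_family_def by blast
  qed (use assms(3) in blast)+
qed

lemma block_family_UN:
  assumes "\<And>j. j \<in> I \<Longrightarrow> block_family (Q j)"
    and "\<And>j l. j \<in> I \<Longrightarrow> l \<in> I \<Longrightarrow> j \<noteq> l \<Longrightarrow> \<Union>(Q j) \<inter> \<Union>(Q l) = {}"
  shows "block_family (\<Union>j\<in>I. Q j)"
  unfolding block_family_def
proof (intro conjI ballI impI)
  fix b assume "b \<in> (\<Union>j\<in>I. Q j)" then show "card b = 2" using assms(1)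
    unfolding block_family_def by blast
next
  fix b c assume b: "b \<in> (\<Union>j\<in>I. Q j)" and c: "c \<in> (\<Union>j\<in>I. Q j)" and bc: "b \<noteq> c"
  then obtain j l where jl: "j \<in> I" "b \<in> Q j" "l \<in> I" "c \<in> Q l" by blast
  show "b \<inter> c = {}"
  proof (cases "j = l")
    case True then show ?thesis using assms(1) jl bc unfolding block_family_def by blast
  next
    case False then show ?thesis using assms(2)[OF jl(1,3) False] jl by blast
  qed
qed

lemma block_family_image: assumes "block_family P" "inj_on f (\<Union>P)"
  shows "block_family (image f ` P)"
  unfolding block_family_def
proof (intro conjI ballI impI)
  fix b assume "b \<in> image f ` P"
  then obtain c where c: "c \<in> P" "b = f ` c" by auto
  have "inj_on f c" using assms(2) c(1) by (meson Union_upper inj_on_subset)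
  then show "card b = 2" using c assms(1) by (simp add: card_image block_family_def)
next
  fix b b' assume "b \<in> image f ` P" "b' \<in> image f ` P" "b \<noteq> b'"
  then obtain c c' where c: "c \<in> P" "b = f ` c" "c' \<in> P" "b' = f ` c'" by auto
  with \<open>b \<noteq> b'\<close> have "c \<noteq> c'" by auto
  then have "c \<inter> c' = {}" using assms(1) c by (auto simp: block_family_def)
  then show "b \<inter> b' = {}" using c assms(2) unfolding inj_on_def by blast
qed

lemma pairing_finite: "pairing n P \<Longrightarrow> finite P"
  by (auto simp: pairing_iff intro: block_family_finite)

lemma pairing_card: "pairing n P \<Longrightarrow> card P = n"
  using card_Union_block_family[of P] pairing_finite[of n P] by (auto simp: pairing_iff)

lemma finite_pairings: "finite {P. pairing n P}"
proof (rule finite_subset)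
  show "{P. pairing n P} \<subseteq> Pow (Pow {1..2*n})" by (auto simp: pairing_iff)
qed auto

lemma finite_pairings_with: "finite {P. pairing n P \<and> Q P}"
  by (rule finite_subset[OF _ finite_pairings]) auto

lemma pairing_0: "pairing 0 P \<longleftrightarrow> P = {}"
proof
  assume "pairing 0 P"
  then show "P = {}" using pairing_card pairing_finite by (metis card_0_eq)
qed (simp add: pairing_def)

(* rank A x is the number of elements of A below x; on A it is the
   order-preserving bijection onto {0..<card A}. *)
definition rank :: "nat set \<Rightarrow> nat \<Rightarrow> nat" where "rank A x = card {y\<in>A. y < x}"

lemma rank_mono: "finite A \<Longrightarrow> mono (rank A)"
  unfolding rank_def by (intro monoI card_mono) auto

lemma rank_less: assumes "finite A" "x \<in> A" "x < y" shows "rank A x < rank A y"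
  unfolding rank_def using assms by (intro psubset_card_mono) auto

lemma rank_le_card: "finite A \<Longrightarrow> rank A x \<le> card A"
  unfolding rank_def by (intro card_mono) auto

lemma rank_lt_card: "finite A \<Longrightarrow> x \<in> A \<Longrightarrow> rank A x < card A"
  unfolding rank_def by (intro psubset_card_mono) auto

lemma rank_inj: "finite A \<Longrightarrow> inj_on (rank A) A"
  by (intro inj_onI) (metis linorder_neqE_nat less_irrefl rank_less)

lemma rank_image: assumes "finite A" shows "rank A ` A = {..<card A}"
proof -
  have "rank A ` A \<subseteq> {..<card A}" using rank_lt_card[OF assms] by auto
  moreover have "card (rank A ` A) = card {..<card A}" using card_image[OF rank_inj[OF assms]]
    by simp
  ultimately show ?thesis by (intro card_subset_eq) auto
qed

lemma rank_above: assumes "finite A" "\<forall>a\<in>A. a < x" shows "rank A x = card A"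
  unfolding rank_def using assms by (intro arg_cong[where f=card]) auto

(* Given gap sizes ms = [m_1, m_2, ...], slot ms c is the position of the c-th
   root point when m_j blocks (that is 2 m_j points) are placed between root
   points j and j+1: slot ms c = c + 2 (m_1 + ... + m_{c-1}). *)
definition slot :: "nat list \<Rightarrow> nat \<Rightarrow> nat" where
  "slot ms c = c + 2 * sum_list (take (c - 1) ms)"

lemma sum_list_take_Suc:
  "sum_list (take (Suc k) ms) = sum_list (take k ms) + (if k < length ms then ms!k else 0)"
  by (simp add: take_Suc_conv_app_nth)

lemma slot_Suc:
  "slot ms (Suc (Suc c)) = slot ms (Suc c) + 1 + 2 * (if c < length ms then ms!c else 0)"
  unfolding slot_def by (simp add: sum_list_take_Suc)

lemma slot_1 [simp]: "slot ms 1 = 1" "slot ms (Suc 0) = 1"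
  by (simp_all add: slot_def)

lemma slot_strict_mono: "strict_mono (slot ms)"
  unfolding strict_mono_Suc_iff
proof
  fix c show "slot ms c < slot ms (Suc c)"
    by (cases c) (simp_all add: slot_def sum_list_take_Suc)
qed

lemma slot_mono: "mono (slot ms)"
  using slot_strict_mono strict_mono_mono by blast

(* Root points keep their parity, so a relabelled parity-reversing root stays
   parity-reversing. *)
lemma slot_parity: "even (slot ms c) = even c"
  by (simp add: slot_def)

lemma slot_inj: "inj (slot ms)"
  using slot_strict_mono strict_mono_imp_inj_on by blast

lemma image_plus_interval: "(\<lambda>y. y + s) ` {1..2*c} = {s<..<s+1+2*(c::nat)}"
proof -
  have "{s<..<s+1+2*c} = {1+s..2*c+s}" by auto
  then show ?thesis by simp
qed

lemma image_minus_interval: "(\<lambda>y. y - s) ` {s<..<s+1+2*c} = {1..2*(c::nat)}"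
  unfolding image_plus_interval[symmetric] image_image by simp

lemma crosses_sym: "crosses x y = crosses y x"
  unfolding crosses_def by auto

lemma mono_inj_on_less_iff:
  fixes f :: "'a::linorder \<Rightarrow> 'b::linorder"
  assumes "mono f" "inj_on f S" "a \<in> S" "b \<in> S"
  shows "f a < f b \<longleftrightarrow> a < b"
proof
  assume "a < b" then have "f a \<le> f b" using monoD[OF assms(1), of a b] by simp
  moreover have "f a \<noteq> f b" using \<open>a < b\<close> assms(2-4) inj_on_contraD by fastforce
  ultimately show "f a < f b" by simp
next
  assume "f a < f b"
  show "a < b"
  proof (rule ccontr)
    assume "\<not> a < b" then have "b \<le> a" by simp
    then have "f b \<le> f a" using monoD[OF assms(1), of b a] by simp
    then show False using \<open>f a < f b\<close> by simp
  qed
qed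

(* Crossing only depends on the relative order of the four endpoints, so it is
   invariant under order-preserving injective relabelling. *)
lemma crosses_image:
  fixes f :: "nat \<Rightarrow> nat"
  assumes "mono f" "inj_on f S" "x \<subseteq> S" "y \<subseteq> S" "card x = 2" "card y = 2"
  shows "crosses (f ` x) (f ` y) = crosses x y"
proof -
  have fx: "finite x" "x \<noteq> {}" "finite y" "y \<noteq> {}"
    using card_2_Min_Max(1,2) assms(5,6) by blast+
  have m: "Min (f ` x) = f (Min x)" "Max (f ` x) = f (Max x)"
    "Min (f ` y) = f (Min y)" "Max (f ` y) = f (Max y)"
    using mono_Min_commute[OF assms(1)] mono_Max_commute[OF assms(1)] fx by metis+
  have S: "Min x \<in> S" "Max x \<in> S" "Min y \<in> S" "Max y \<in> S"
    using assms(3-6) card_2_Min_Max(5,6) by blast+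
  note l = mono_inj_on_less_iff[OF assms(1,2)]
  show ?thesis unfolding crosses_def m
    by (simp only: l[OF S(1) S(3)] l[OF S(3) S(1)] l[OF S(3) S(2)] l[OF S(2) S(4)]
      l[OF S(1) S(4)] l[OF S(4) S(2)])
qed

definition crossing_pairs :: "nat set set \<Rightarrow> (nat set \<times> nat set) set" where
  "crossing_pairs P = {(x, y). x \<in> P \<and> y \<in> P \<and> Min x < Min y \<and> crosses x y}"

lemma crossings_eq_card: "crossings P = card (crossing_pairs P)"
  unfolding crossings_def crossing_pairs_def by simp

lemma finite_crossing_pairs: "finite P \<Longrightarrow> finite (crossing_pairs P)"
  unfolding crossing_pairs_def by (rule finite_subset[of _ "P \<times> P"]) auto

lemma crossings_image:
  fixes f :: "nat \<Rightarrow> nat"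
  assumes "mono f" "inj_on f (\<Union>P)" "block_family P" "finite P"
  shows "crossings (image f ` P) = crossings P"
proof -
  have c2: "\<And>b. b \<in> P \<Longrightarrow> card b = 2" using assms(3)
    by (auto simp: block_family_def)
  have inj: "inj_on (image f) P" using assms(2)
    by (metis Pow_iff Union_upper inj_on_image inj_on_subset subsetI)
  have mn: "\<And>b. b \<in> P \<Longrightarrow> Min (f ` b) = f (Min b)"
    using mono_Min_commute[OF assms(1)] card_2_Min_Max(1,2) c2 by metis
  have lt: "\<And>x y. x \<in> P \<Longrightarrow> y \<in> P \<Longrightarrow> f (Min x) < f (Min y) \<longleftrightarrow> Min x < Min y"
    using mono_inj_on_less_iff[OF assms(1,2)] card_2_Min_Max(5) c2 by blast
  have cr: "\<And>x y. x \<in> P \<Longrightarrow> y \<in> P \<Longrightarrow> crosses (f ` x) (f ` y) = crosses x y"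
    using crosses_image[OF assms(1,2)] c2 by blast
  have "crossing_pairs (image f ` P) = (\<lambda>(x,y). (f ` x, f ` y)) ` crossing_pairs P"
    unfolding crossing_pairs_def using mn lt cr by (auto simp: image_iff)
  moreover have "inj_on (\<lambda>(x,y). (f ` x, f ` y)) (crossing_pairs P)"
    using inj unfolding crossing_pairs_def inj_on_def by auto
  ultimately show ?thesis unfolding crossings_eq_card by (simp add: card_image)
qed

lemma crossings_Un:
  assumes "finite A" "finite B" "A \<inter> B = {}"
    and "\<And>x y. x \<in> A \<Longrightarrow> y \<in> B \<Longrightarrow> \<not> crosses x y"
  shows "crossings (A \<union> B) = crossings A + crossings B"
proof -
  have "crossing_pairs (A \<union> B) = crossing_pairs A \<union> crossing_pairs B"
    unfolding crossing_pairs_def using assms(4) crosses_sym by blast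
  moreover have "crossing_pairs A \<inter> crossing_pairs B = {}" using assms(3)
    unfolding crossing_pairs_def by auto
  ultimately show ?thesis unfolding crossings_eq_card
    by (simp add: card_Un_disjoint finite_crossing_pairs assms)
qed

lemma crossings_UN:
  assumes "finite I" "\<And>j. j \<in> I \<Longrightarrow> finite (Q j)"
    and "\<And>j k. j \<in> I \<Longrightarrow> k \<in> I \<Longrightarrow> j \<noteq> k \<Longrightarrow> Q j \<inter> Q k = {}"
    and "\<And>j k x y. j \<in> I \<Longrightarrow> k \<in> I \<Longrightarrow> j \<noteq> k \<Longrightarrow> x \<in> Q j \<Longrightarrow> y \<in> Q k \<Longrightarrow>
      \<not> crosses x y"
  shows "crossings (\<Union>j\<in>I. Q j) = (\<Sum>j\<in>I. crossings (Q j))"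
proof -
  have "crossing_pairs (\<Union>j\<in>I. Q j) = (\<Union>j\<in>I. crossing_pairs (Q j))"
    unfolding crossing_pairs_def using assms(4) by blast
  moreover have "card (\<Union>j\<in>I. crossing_pairs (Q j)) = (\<Sum>j\<in>I. card (crossing_pairs (Q j)))"
    using assms(1,2,3) by (intro card_UN_disjoint)
      (auto simp: finite_crossing_pairs, auto simp: crossing_pairs_def)
  ultimately show ?thesis unfolding crossings_eq_card by simp
qed

lemma no_cross_interval:
  assumes "card x = 2" "card y = 2" "y \<subseteq> {lo<..<hi}" "\<forall>z\<in>x. z \<notin> {lo<..<hi}"
  shows "\<not> crosses x y"
proof -
  have "Min y \<in> {lo<..<hi}" "Max y \<in> {lo<..<hi}"
    using assms(3) card_2_Min_Max(5,6)[OF assms(2)] by auto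
  moreover have "Min x \<notin> {lo<..<hi}" "Max x \<notin> {lo<..<hi}"
    using assms(4) card_2_Min_Max(5,6)[OF assms(1)] by auto
  ultimately show ?thesis unfolding crosses_def by auto
qed

lemma no_cross_around:
  assumes "card y = 2" "card z = 2" "lo < Min z" "Max z < hi"
    "Max y < lo \<or> hi < Min y \<or> (Min y < lo \<and> hi < Max y)"
  shows "\<not> crosses y z"
  using assms unfolding crosses_def by linarith

lemma parity_reversing_image:
  assumes "parity_reversing P" "\<And>x. x \<in> \<Union>P \<Longrightarrow> even (g x) = (even x = e)"
  shows "parity_reversing (image g ` P)"
  unfolding parity_reversing_def
proof
  fix b assume "b \<in> image g ` P"
  then obtain c where c: "c \<in> P" "b = g ` c" by auto
  then obtain x y where xy: "x \<in> c" "y \<in> c" "odd x" "even y" using assms(1)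
    by (auto simp: parity_reversing_def)
  have "even (g x) = (even x = e)" "even (g y) = (even y = e)" using assms(2) xy c by auto
  then show "\<exists>x\<in>b. \<exists>y\<in>b. odd x \<and> even y" using xy c
    by (cases e) auto
qed

(* Connectedness is reachability in the crossing graph. *)
definition cross_rel :: "nat set set \<Rightarrow> (nat set \<times> nat set) set" where
  "cross_rel P = {(x,y). x \<in> P \<and> y \<in> P \<and> crosses x y}"

lemma reachable_closed:
  assumes "(b0, b) \<in> (cross_rel Q)\<^sup>*" "b0 \<in> D"
    and "\<And>x y. x \<in> D \<Longrightarrow> y \<in> Q \<Longrightarrow> crosses x y \<Longrightarrow> y \<in> D"
  shows "b \<in> D"
  using assms(1) by induction (use assms(2,3) in \<open>auto simp: cross_rel_def\<close>)

lemma connected_reachable: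
  assumes "connected_pairing Q" "b0 \<in> Q" "b \<in> Q"
  shows "(b0, b) \<in> (cross_rel Q)\<^sup>*"
proof (rule ccontr)
  assume nb: "(b0, b) \<notin> (cross_rel Q)\<^sup>*"
  define C1 where "C1 = {x\<in>Q. (b0, x) \<in> (cross_rel Q)\<^sup>*}"
  define C2 where "C2 = Q - C1"
  have "C1 \<noteq> {}" using assms(2) unfolding C1_def by auto
  moreover have "C2 \<noteq> {}" using assms(3) nb unfolding C2_def C1_def by auto
  moreover have "\<forall>x\<in>C1. \<forall>y\<in>C2. \<not> crosses x y"
  proof (intro ballI notI)
    fix x y assume "x \<in> C1" "y \<in> C2" "crosses x y"
    then have "(b0, y) \<in> (cross_rel Q)\<^sup>*" unfolding C1_def C2_def cross_rel_def
      by (auto intro: rtrancl_into_rtrancl)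
    then show False using \<open>y \<in> C2\<close> unfolding C1_def C2_def by auto
  qed
  moreover have "C1 \<union> C2 = Q" "C1 \<inter> C2 = {}" unfolding C1_def C2_def by auto
  ultimately show False using assms(1) unfolding connected_pairing_def by blast
qed

lemma reachable_connected:
  assumes b0: "b0 \<in> Q" and reach: "\<And>b. b \<in> Q \<Longrightarrow> (b0, b) \<in> (cross_rel Q)\<^sup>*"
  shows "connected_pairing Q"
  unfolding connected_pairing_def
proof
  assume "\<exists>C1 C2. C1 \<noteq> {} \<and> C2 \<noteq> {} \<and> C1 \<union> C2 = Q \<and> C1 \<inter> C2 = {} \<and>
    (\<forall>x\<in>C1. \<forall>y\<in>C2. \<not> crosses x y)"
  then obtain C1 C2 where C: "C1 \<noteq> {}" "C2 \<noteq> {}" "C1 \<union> C2 = Q" "C1 \<inter> C2 = {}"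
    "\<forall>x\<in>C1. \<forall>y\<in>C2. \<not> crosses x y" by blast
  (* the side containing b0 is closed under crossing, hence is all of Q *)
  have side: "Q \<subseteq> D" if D: "b0 \<in> D" "D \<union> E = Q" "\<forall>x\<in>D. \<forall>y\<in>E. \<not> crosses x y" for D E
  proof
    fix b assume "b \<in> Q"
    show "b \<in> D" using reach[OF \<open>b \<in> Q\<close>] D(1)
    proof (rule reachable_closed)
      fix x y assume "x \<in> D" "y \<in> Q" "crosses x y"
      then show "y \<in> D" using D(2,3) by blast
    qed
  qed
  consider "b0 \<in> C1" | "b0 \<in> C2" using C(3) b0 by blast
  then show False
  proof cases
    case 1
    then have "Q \<subseteq> C1" using side[of C1 C2] C(3,5) by blast
    then show False using C(2,3,4) by blast
  next
    case 2
    have "\<forall>x\<in>C2. \<forall>y\<in>C1. \<not> crosses x y" using C(5) crosses_sym by blast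
    then have "Q \<subseteq> C2" using side[of C2 C1] 2 C(3) by blast
    then show False using C(1,3,4) by blast
  qed
qed

lemma rtrancl_map:
  assumes "(a, b) \<in> r\<^sup>*" "\<And>x y. (x, y) \<in> r \<Longrightarrow> (h x, h y) \<in> s"
  shows "(h a, h b) \<in> s\<^sup>*"
  using assms(1) by induction (auto intro: rtrancl_into_rtrancl assms(2))

lemma connected_pairing_image:
  assumes conn: "connected_pairing Q"
    and cr: "\<And>x y. x \<in> Q \<Longrightarrow> y \<in> Q \<Longrightarrow> crosses (g x) (g y) = crosses x y"
  shows "connected_pairing (g ` Q)"
proof (cases "Q = {}")
  case True then show ?thesis by (auto simp: connected_pairing_def)
next
  case False
  then obtain b0 where b0: "b0 \<in> Q" by blast
  show ?thesis
  proof (rule reachable_connected)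
    show "g b0 \<in> g ` Q" using b0 by blast
    fix b assume "b \<in> g ` Q"
    then obtain c where c: "c \<in> Q" "b = g c" by blast
    have "(b0, c) \<in> (cross_rel Q)\<^sup>*" by (rule connected_reachable[OF conn b0 c(1)])
    then show "(g b0, b) \<in> (cross_rel (g ` Q))\<^sup>*" unfolding c(2)
      by (rule rtrancl_map) (use cr in \<open>auto simp: cross_rel_def\<close>)
  qed
qed

definition PR :: "nat \<Rightarrow> nat set set set" where
  "PR n = {P. pairing n P \<and> parity_reversing P}"

definition CPR :: "nat \<Rightarrow> nat set set set" where
  "CPR n = {P. pairing n P \<and> parity_reversing P \<and> connected_pairing P}"

lemma finite_PR: "finite (PR n)" unfolding PR_def by (rule finite_pairings_with)

lemma finite_CPR: "finite (CPR n)" unfolding CPR_def by (rule finite_pairings_with)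

(* PR_lists k m: lists of k parity-reversing pairings, each tagged with its size,
   of total size m.  They index the coefficients of the k-th power of the series
   of parity-reversing pairings. *)
definition PR_lists :: "nat \<Rightarrow> nat \<Rightarrow> (nat \<times> nat set set) list set" where
  "PR_lists k m =
     {gs. length gs = k \<and> (\<forall>g\<in>set gs. snd g \<in> PR (fst g)) \<and> sum_list (map fst gs) = m}"

lemma finite_PR_lists: "finite (PR_lists k m)"
proof (rule finite_subset)
  show "PR_lists k m \<subseteq> {gs. set gs \<subseteq> Sigma {..m} PR \<and> length gs = k}"
  proof
    fix gs assume gs: "gs \<in> PR_lists k m"
    have "set gs \<subseteq> Sigma {..m} PR"
    proof
      fix g assume g: "g \<in> set gs"
      then have "fst g \<le> sum_list (map fst gs)" by (auto intro!: member_le_sum_list)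
      then show "g \<in> Sigma {..m} PR" using gs g unfolding PR_lists_def by (cases g) auto
    qed
    then show "gs \<in> {gs. set gs \<subseteq> Sigma {..m} PR \<and> length gs = k}" using gs
      unfolding PR_lists_def by auto
  qed
  show "finite {gs. set gs \<subseteq> Sigma {..m} PR \<and> length gs = k}"
    by (intro finite_lists_length_eq finite_SigmaI) (auto simp: finite_PR)
qed

lemma PR_lists_0: "PR_lists 0 m = (if m = 0 then {[]} else {})"
  unfolding PR_lists_def by auto

lemma sum_PR_lists_Suc:
  "(\<Sum>gs\<in>PR_lists (Suc k) m. f gs) =
   (\<Sum>(a, P, gs)\<in>Sigma {0..m} (\<lambda>a. PR a \<times> PR_lists k (m - a)). f ((a, P) # gs))"
  by (rule sum.reindex_bij_witness[where i = "\<lambda>(a, P, gs). (a, P) # gs"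
        and j = "\<lambda>gs. (fst (hd gs), snd (hd gs), tl gs)"])
    (auto simp: PR_lists_def length_Suc_conv)

definition list_weight :: "(nat \<Rightarrow> 'a::comm_ring_1) \<Rightarrow> (nat \<times> nat set set) list \<Rightarrow> 'a" where
  "list_weight \<phi> gs = prod_list (map (\<lambda>g. \<phi> (crossings (snd g))) gs)"

lemma hom_sum:
  fixes \<phi> :: "nat \<Rightarrow> 'a::comm_monoid_mult"
  assumes "\<phi> 0 = 1" "\<And>a b. \<phi> (a + b) = \<phi> a * \<phi> b" "finite I"
  shows "\<phi> (\<Sum>j\<in>I. a j) = (\<Prod>j\<in>I. \<phi> (a j))"
  using assms(3) by (induction rule: finite_induct) (simp_all add: assms(1,2))

definition PR_series :: "(nat \<Rightarrow> 'a::comm_ring_1) \<Rightarrow> 'a fps" where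
  "PR_series \<phi> = Abs_fps (\<lambda>n. \<Sum>P\<in>PR n. \<phi> (crossings P))"

definition CPR_series :: "(nat \<Rightarrow> 'a::comm_ring_1) \<Rightarrow> 'a fps" where
  "CPR_series \<phi> = Abs_fps (\<lambda>n. \<Sum>P\<in>CPR n. \<phi> (crossings P))"

lemma PR_series_nth: "PR_series \<phi> $ n = (\<Sum>P\<in>PR n. \<phi> (crossings P))"
  by (simp add: PR_series_def)

lemma CPR_series_nth: "CPR_series \<phi> $ n = (\<Sum>P\<in>CPR n. \<phi> (crossings P))"
  by (simp add: CPR_series_def)

lemma PR_series_power_nth: "(PR_series \<phi> ^ k) $ m = (\<Sum>gs\<in>PR_lists k m. list_weight \<phi> gs)"
proof (induction k arbitrary: m)
  case 0 then show ?case by (simp add: PR_lists_0 list_weight_def)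
next
  case (Suc k)
  have "(PR_series \<phi> ^ Suc k) $ m = (\<Sum>a=0..m. PR_series \<phi> $ a * (PR_series \<phi> ^ k) $ (m - a))"
    by (simp add: fps_mult_nth)
  also have "\<dots> = (\<Sum>a=0..m. \<Sum>(P, gs)\<in>PR a \<times> PR_lists k (m - a).
                      \<phi> (crossings P) * list_weight \<phi> gs)"
    by (simp add: PR_series_nth Suc.IH sum_product sum.cartesian_product)
  also have "\<dots> = (\<Sum>(a, P, gs)\<in>Sigma {0..m} (\<lambda>a. PR a \<times> PR_lists k (m - a)).
                      \<phi> (crossings P) * list_weight \<phi> gs)"
    by (subst sum.Sigma) (auto simp: finite_PR finite_PR_lists)
  also have "\<dots> = (\<Sum>gs\<in>PR_lists (Suc k) m. list_weight \<phi> gs)"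
    by (subst sum_PR_lists_Suc) (simp add: list_weight_def case_prod_beta)
  finally show ?case .
qed

(* The data of the decomposition of a pairing of [2n]: the size i of the root, a
   connected pairing of [2i] and 2i pairings filling the gaps. *)
definition decomp_data :: "nat \<Rightarrow> (nat \<times> nat set set \<times> (nat \<times> nat set set) list) set" where
  "decomp_data n = Sigma {0..n} (\<lambda>i. CPR i \<times> PR_lists (2 * i) (n - i))"

(* A weight-preserving bijection between PR n and decomp_data n is exactly the
   coefficientwise content of the functional equation S = T o (z S^2). *)
lemma functional_equation_from_decomposition:
  fixes \<phi> :: "nat \<Rightarrow> 'a::comm_ring_1"
  assumes decomposition: "\<And>n. (\<Sum>P\<in>PR n. \<phi> (crossings P)) =
      (\<Sum>(i, C, gs)\<in>decomp_data n. \<phi> (crossings C) * list_weight \<phi> gs)"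
  shows "PR_series \<phi> = CPR_series \<phi> oo (fps_X * PR_series \<phi> ^ 2)"
proof (rule fps_ext)
  fix n
  define S T where "S = PR_series \<phi>" and "T = CPR_series \<phi>"
  have "(T oo (fps_X * S ^ 2)) $ n = (\<Sum>i=0..n. T $ i * ((fps_X * S ^ 2) ^ i) $ n)"
    by (simp add: fps_compose_nth)
  also have "\<dots> = (\<Sum>i=0..n. T $ i * (S ^ (2 * i)) $ (n - i))"
  proof (intro sum.cong refl)
    fix i assume "i \<in> {0..n}"
    have "(fps_X * S ^ 2) ^ i = fps_X ^ i * S ^ (2 * i)"
      by (simp add: power_mult_distrib power_mult)
    then show "T $ i * ((fps_X * S ^ 2) ^ i) $ n = T $ i * (S ^ (2 * i)) $ (n - i)"
      using \<open>i \<in> {0..n}\<close> by (simp add: fps_X_power_mult_nth)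
  qed
  also have "\<dots> = (\<Sum>i=0..n. \<Sum>(C, gs)\<in>CPR i \<times> PR_lists (2 * i) (n - i).
                      \<phi> (crossings C) * list_weight \<phi> gs)"
    by (simp add: S_def T_def CPR_series_nth PR_series_power_nth sum_product
        sum.cartesian_product)
  also have "\<dots> = (\<Sum>(i, C, gs)\<in>decomp_data n. \<phi> (crossings C) * list_weight \<phi> gs)"
    unfolding decomp_data_def by (subst sum.Sigma) (auto simp: finite_CPR finite_PR_lists)
  also have "\<dots> = S $ n" by (simp add: S_def PR_series_nth decomposition)
  finally show "PR_series \<phi> $ n = (CPR_series \<phi> oo (fps_X * PR_series \<phi> ^ 2)) $ n"
    by (simp add: S_def T_def)
qed


(* There are n! parity-reversing pairings of [2n]: the odd point 2k+1 is paired
   with the even point 2 xs!k for a permutation xs of {1..n}. *)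
definition pairing_of_perm :: "nat \<Rightarrow> nat list \<Rightarrow> nat set set" where
  "pairing_of_perm n xs = (\<lambda>k. {2*k+1, 2*(xs!k)}) ` {..<n}"

definition perm_lists :: "nat \<Rightarrow> nat list set" where
  "perm_lists n = {xs. length xs = n \<and> distinct xs \<and> set xs \<subseteq> {1..n}}"

lemma card_perm_lists: "card (perm_lists n) = fact n"
proof -
  have "card (perm_lists n) = \<Prod>{card {1..n} - n + 1 .. card {1..n}}"
    unfolding perm_lists_def by (rule card_lists_distinct_length_eq) auto
  then show ?thesis by (simp add: fact_prod)
qed

lemma perm_lists_set: assumes "xs \<in> perm_lists n" shows "set xs = {1..n}"
proof -
  have "card (set xs) = n" using assms unfolding perm_lists_def by (simp add: distinct_card)
  then show ?thesis using assms unfolding perm_lists_def by (intro card_subset_eq) auto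
qed

lemma odd_neq_even: "2 * k + 1 \<noteq> 2 * (m::nat)" by presburger

lemma pairing_of_perm_block_family:
  assumes xs: "xs \<in> perm_lists n"
  shows "block_family (pairing_of_perm n xs)"
  unfolding block_family_def pairing_of_perm_def
proof (intro conjI ballI impI)
  fix b assume "b \<in> (\<lambda>k. {2*k+1, 2*(xs!k)}) ` {..<n}"
  then obtain k where "b = {2*k+1, 2*(xs!k)}" by auto
  then show "card b = 2" using odd_neq_even[of k "xs!k"] by simp
next
  fix b c assume "b \<in> (\<lambda>k. {2*k+1, 2*(xs!k)}) ` {..<n}" "c \<in> (\<lambda>k. {2*k+1, 2*(xs!k)}) ` {..<n}"
    and "b \<noteq> c"
  then obtain k l where kl: "b = {2*k+1, 2*(xs!k)}" "c = {2*l+1, 2*(xs!l)}" "k < n" "l < n" "k \<noteq> l"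
    by auto
  then have "xs!k \<noteq> xs!l" using xs by (simp add: perm_lists_def nth_eq_iff_index_eq)
  then show "b \<inter> c = {}"
    using kl odd_neq_even[of k "xs!l"] odd_neq_even[of l "xs!k"] by auto
qed

lemma pairing_of_perm_Union:
  assumes xs: "xs \<in> perm_lists n"
  shows "\<Union>(pairing_of_perm n xs) = {1..2*n}"
proof
  have len: "length xs = n" using xs by (simp add: perm_lists_def)
  note setx = perm_lists_set[OF xs]
  show "\<Union>(pairing_of_perm n xs) \<subseteq> {1..2*n}"
  proof
    fix y assume "y \<in> \<Union>(pairing_of_perm n xs)"
    then obtain k where k: "k < n" "y = 2*k+1 \<or> y = 2*(xs!k)"
      unfolding pairing_of_perm_def by auto
    have "xs!k \<in> {1..n}" using k(1) len setx by (metis nth_mem)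
    then show "y \<in> {1..2*n}" using k by auto
  qed
  show "{1..2*n} \<subseteq> \<Union>(pairing_of_perm n xs)"
  proof
    fix y assume y: "y \<in> {1..2*n}"
    show "y \<in> \<Union>(pairing_of_perm n xs)"
    proof (cases "even y")
      case True
      then obtain m where m: "y = 2*m" by blast
      then have "m \<in> set xs" using y setx by auto
      then obtain k where "k < n" "xs!k = m" using len by (metis in_set_conv_nth)
      then show ?thesis using m unfolding pairing_of_perm_def by auto
    next
      case False
      then obtain k where k: "y = 2*k+1" by (metis oddE)
      then have "k < n" using y by auto
      then show ?thesis using k unfolding pairing_of_perm_def by auto
    qed
  qed
qed

lemma pairing_of_perm_PR: "xs \<in> perm_lists n \<Longrightarrow> pairing_of_perm n xs \<in> PR n"
  using pairing_of_perm_block_family pairing_of_perm_Union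
  unfolding PR_def pairing_iff parity_reversing_def pairing_of_perm_def by auto

lemma pairing_of_perm_inj: "inj_on (pairing_of_perm n) (perm_lists n)"
proof (rule inj_onI)
  fix xs ys assume xs: "xs \<in> perm_lists n" and ys: "ys \<in> perm_lists n"
    and eq: "pairing_of_perm n xs = pairing_of_perm n ys"
  have len: "length xs = n" "length ys = n" using xs ys by (auto simp: perm_lists_def)
  show "xs = ys"
  proof (rule nth_equalityI)
    show "length xs = length ys" using len by simp
    fix k assume "k < length xs"
    then have "{2*k+1, 2*(xs!k)} \<in> pairing_of_perm n ys" using eq len
      unfolding pairing_of_perm_def by auto
    then obtain l where l: "{2*k+1, 2*(xs!k)} = {2*l+1, 2*(ys!l)}" unfolding pairing_of_perm_def
      by auto
    then have "2*k+1 = 2*l+1" using odd_neq_even[of k "ys!l"] by (metis doubleton_eq_iff)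
    then show "xs!k = ys!k" using l odd_neq_even[of k "ys!l"] odd_neq_even[of l "xs!k"]
      by (metis doubleton_eq_iff add_right_cancel mult_left_cancel zero_neq_numeral)
  qed
qed

(* Conversely, every parity-reversing pairing determines the partner of each odd
   point, and hence the permutation. *)
definition partner :: "nat set set \<Rightarrow> nat \<Rightarrow> nat" where
  "partner P x = (THE y. even y \<and> {x, y} \<in> P)"

lemma PR_block: assumes "P \<in> PR n" "b \<in> P" "odd x" "x \<in> b"
  shows "\<exists>y. even y \<and> b = {x, y}"
proof -
  have c2: "card b = 2" using assms(1,2) unfolding PR_def pairing_def by auto
  obtain u v where uv: "u \<in> b" "v \<in> b" "odd u" "even v" using assms(1,2)
    unfolding PR_def parity_reversing_def by blast
  obtain p q where pq: "b = {p, q}" "p \<noteq> q" using c2 by (auto simp: card_2_iff)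
  have "u \<noteq> v" using uv by auto
  then have "b = {u, v}" using pq uv by auto
  then have "x = u" using assms(3,4) uv by auto
  then show ?thesis using \<open>b = {u, v}\<close> uv by blast
qed

lemma PR_disjoint: assumes "P \<in> PR n" "b \<in> P" "c \<in> P" "x \<in> b" "x \<in> c"
  shows "b = c"
  using assms unfolding PR_def pairing_def by blast

lemma partner_prop: assumes "P \<in> PR n" "odd x" "x \<in> {1..2*n}"
  shows "even (partner P x) \<and> {x, partner P x} \<in> P"
proof -
  have "x \<in> \<Union>P" using assms unfolding PR_def pairing_def by auto
  then obtain b where b: "b \<in> P" "x \<in> b" by auto
  then obtain y where y: "even y" "b = {x, y}" using PR_block assms by blast
  have "\<exists>!y. even y \<and> {x, y} \<in> P"
  proof
    show "even y \<and> {x, y} \<in> P" using y b by simp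
    fix y' assume y': "even y' \<and> {x, y'} \<in> P"
    then have "{x, y'} = {x, y}" using PR_disjoint[OF assms(1), of "{x,y'}" "{x,y}" x] y b by auto
    then show "y' = y" using y y' assms(2) by (metis doubleton_eq_iff)
  qed
  then show ?thesis unfolding partner_def by (rule theI')
qed

definition perm_of_pairing :: "nat \<Rightarrow> nat set set \<Rightarrow> nat list" where
  "perm_of_pairing n P = map (\<lambda>k. partner P (2*k+1) div 2) [0..<n]"

lemma partner_odd:
  assumes P: "P \<in> PR n" and k: "k < n"
  shows "even (partner P (2*k+1))" "{2*k+1, partner P (2*k+1)} \<in> P"
    "2 * (perm_of_pairing n P ! k) = partner P (2*k+1)"
  using partner_prop[OF P, of "2*k+1"] k by (auto simp: perm_of_pairing_def)

lemma partner_odd_inj: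
  assumes P: "P \<in> PR n" and kl: "k < n" "l < n"
    and eq: "partner P (2*k+1) = partner P (2*l+1)"
  shows "k = l"
proof -
  have "{2*k+1, partner P (2*k+1)} \<in> P" "{2*l+1, partner P (2*k+1)} \<in> P"
    using partner_odd(2)[OF P] kl eq by metis+
  then have "{2*k+1, partner P (2*k+1)} = {2*l+1, partner P (2*k+1)}"
    using PR_disjoint[OF P] by blast
  moreover have "2*k+1 \<noteq> partner P (2*k+1)"
    using partner_odd(1)[OF P kl(1)] by auto
  ultimately have "2*k+1 = 2*l+1" by (metis doubleton_eq_iff)
  then show "k = l" by simp
qed

lemma perm_of_pairing_perm_lists:
  assumes P: "P \<in> PR n"
  shows "perm_of_pairing n P \<in> perm_lists n"
proof -
  define xs where "xs = perm_of_pairing n P"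
  have len: "length xs = n" by (simp add: xs_def perm_of_pairing_def)
  have "distinct xs"
    unfolding distinct_conv_nth len
  proof (intro allI impI)
    fix k l assume "k < n" "l < n" "k \<noteq> l"
    then show "xs!k \<noteq> xs!l"
      using partner_odd(3)[OF P] partner_odd_inj[OF P] unfolding xs_def by metis
  qed
  moreover have "set xs \<subseteq> {1..n}"
  proof
    fix m assume "m \<in> set xs"
    then obtain k where k: "k < n" "m = xs!k" using len by (auto simp: in_set_conv_nth)
    have "partner P (2*k+1) \<in> \<Union>P" using partner_odd(2)[OF P k(1)] by blast
    then have "partner P (2*k+1) \<in> {1..2*n}" using P by (auto simp: PR_def pairing_def)
    then show "m \<in> {1..n}" using k partner_odd(3)[OF P k(1)] by (auto simp: xs_def)
  qed
  ultimately show ?thesis using len by (simp add: perm_lists_def xs_def)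
qed

lemma pairing_of_perm_of_pairing:
  assumes P: "P \<in> PR n"
  shows "pairing_of_perm n (perm_of_pairing n P) = P"
proof
  show "pairing_of_perm n (perm_of_pairing n P) \<subseteq> P"
    using partner_odd[OF P] by (auto simp: pairing_of_perm_def)
  show "P \<subseteq> pairing_of_perm n (perm_of_pairing n P)"
  proof
    fix b assume b: "b \<in> P"
    then obtain x y where xy: "x \<in> b" "y \<in> b" "odd x" "even y"
      using P unfolding PR_def parity_reversing_def by blast
    have "x \<in> {1..2*n}" using xy b P unfolding PR_def pairing_def by auto
    moreover have "x = 2*(x div 2)+1" using xy(3) by presburger
    ultimately obtain k where k: "x = 2*k+1" "k < n" by (intro that[of "x div 2"]) auto
    have "b = {2*k+1, partner P (2*k+1)}"
      using PR_disjoint[OF P b partner_odd(2)[OF P k(2)]] xy k by auto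
    then show "b \<in> pairing_of_perm n (perm_of_pairing n P)"
      using partner_odd(3)[OF P k(2)] k(2) by (auto simp: pairing_of_perm_def)
  qed
qed

lemma card_PR: "card (PR n) = fact n"
proof -
  have "pairing_of_perm n ` perm_lists n = PR n"
  proof
    show "pairing_of_perm n ` perm_lists n \<subseteq> PR n" using pairing_of_perm_PR by blast
    show "PR n \<subseteq> pairing_of_perm n ` perm_lists n"
      using perm_of_pairing_perm_lists pairing_of_perm_of_pairing by (metis image_eqI subsetI)
  qed
  then have "card (PR n) = card (perm_lists n)"
    using card_image[OF pairing_of_perm_inj] by metis
  then show ?thesis by (simp add: card_perm_lists)
qed


(* The decomposition.  first_block P is the block containing 1, root P its
   connected component under crossing, root_points P the points it covers, and
   gap P j the non-root blocks whose left end lies after exactly j+1 root points,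
   i.e. in the gap between root points j+1 and j+2 (or after the last one).
   decompose records the standardized root, and each gap shifted down to
   {1..2 m_j}; glue is the inverse operation. *)
definition first_block :: "nat set set \<Rightarrow> nat set" where
  "first_block P = (THE b. b \<in> P \<and> 1 \<in> b)"

definition root :: "nat set set \<Rightarrow> nat set set" where
  "root P = {b\<in>P. (first_block P, b) \<in> (cross_rel P)\<^sup>*}"

definition root_points :: "nat set set \<Rightarrow> nat set" where
  "root_points P = \<Union>(root P)"

definition gap :: "nat set set \<Rightarrow> nat \<Rightarrow> nat set set" where
  "gap P j = {b \<in> P - root P. rank (root_points P) (Min b) = Suc j}"

definition gap_sizes :: "nat set set \<Rightarrow> nat list" where
  "gap_sizes P = map (\<lambda>j. card (gap P j)) [0..<2 * card (root P)]"

definition gap_pairing :: "nat set set \<Rightarrow> nat \<Rightarrow> nat set set" where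
  "gap_pairing P j = image (\<lambda>y. y - slot (gap_sizes P) (Suc j)) ` gap P j"

definition gap_pairings :: "nat set set \<Rightarrow> (nat \<times> nat set set) list" where
  "gap_pairings P = map (\<lambda>j. (card (gap P j), gap_pairing P j)) [0..<2 * card (root P)]"

definition root_pairing :: "nat set set \<Rightarrow> nat set set" where
  "root_pairing P = image (\<lambda>x. rank (root_points P) x + 1) ` root P"

definition decompose :: "nat set set \<Rightarrow> nat \<times> nat set set \<times> (nat \<times> nat set set) list" where
  "decompose P = (if P = {} then (0, {}, []) else (card (root P), root_pairing P, gap_pairings P))"

definition glue :: "nat set set \<Rightarrow> (nat \<times> nat set set) list \<Rightarrow> nat set set" where
  "glue C gs = image (slot (map fst gs)) ` C \<union>
     (\<Union>j<length gs. image (\<lambda>y. y + slot (map fst gs) (Suc j)) ` snd (gs!j))"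

context
  fixes n P assumes PP: "P \<in> PR n" and Pne: "P \<noteq> {}"
begin

lemma P_block_family: "block_family P" and P_Union: "\<Union>P = {1..2*n}" and P_finite: "finite P"
  and P_parity_reversing: "parity_reversing P"
  using PP unfolding PR_def pairing_iff by (auto intro: pairing_finite[of n] simp: pairing_iff)

lemma P_card_block: "b \<in> P \<Longrightarrow> card b = 2" using P_block_family
  unfolding block_family_def by auto

lemma P_disjoint: "b \<in> P \<Longrightarrow> c \<in> P \<Longrightarrow> z \<in> b \<Longrightarrow> z \<in> c \<Longrightarrow> b = c"
  using P_block_family unfolding block_family_def by blast

lemma P_block_range: "b \<in> P \<Longrightarrow> z \<in> b \<Longrightarrow> z \<in> {1..2*n}"
  using P_Union by blast

lemma size_pos: "1 \<le> n"
proof -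
  obtain b where "b \<in> P" using Pne by blast
  then have "Min b \<in> {1..2*n}" using P_block_range card_2_Min_Max(5)[OF P_card_block] by blast
  then show ?thesis by simp
qed

lemma first_block_prop: "first_block P \<in> P \<and> 1 \<in> first_block P"
proof -
  have "1 \<in> \<Union>P" using P_Union size_pos by simp
  then obtain b where b: "b \<in> P" "1 \<in> b" by blast
  have "\<exists>!b. b \<in> P \<and> 1 \<in> b" using b P_disjoint by blast
  then show ?thesis unfolding first_block_def by (rule theI')
qed

lemma root_subset: "root P \<subseteq> P" unfolding root_def by auto

lemma first_block_root: "first_block P \<in> root P" using first_block_prop unfolding root_def
  by auto

lemma root_cross: assumes "x \<in> root P" "y \<in> P" "crosses x y" shows "y \<in> root P"
proof -
  have "(x, y) \<in> cross_rel P" using assms root_subset unfolding cross_rel_def by auto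
  then show ?thesis using assms unfolding root_def by (auto intro: rtrancl_into_rtrancl)
qed

lemma root_cross': "x \<in> root P \<Longrightarrow> y \<in> P \<Longrightarrow> crosses y x \<Longrightarrow> y \<in> root P"
  using root_cross crosses_sym by blast

lemma root_points_range: "root_points P \<subseteq> {1..2*n}" unfolding root_points_def
  using root_subset P_block_range by blast

lemma finite_root_points: "finite (root_points P)" using root_points_range finite_subset by blast

lemma one_root_point: "1 \<in> root_points P" unfolding root_points_def
  using first_block_root first_block_prop by blast

lemma nonroot_not_root_point: "b \<in> P - root P \<Longrightarrow> z \<in> b \<Longrightarrow> z \<notin> root_points P"
  unfolding root_points_def using P_disjoint root_subset by blast

lemma finite_root: "finite (root P)" using root_subset P_finite finite_subset by blast

lemma root_block_family: "block_family (root P)" using P_block_family root_subset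
  unfolding block_family_def by blast

lemma card_root_points: "card (root_points P) = 2 * card (root P)"
  unfolding root_points_def using card_Union_block_family root_block_family finite_root by blast

lemma rank_end: "rank (root_points P) (2*n+1) = 2 * card (root P)"
proof -
  have "\<forall>a\<in>root_points P. a < 2*n+1" using root_points_range by auto
  then show ?thesis using rank_above[OF finite_root_points] card_root_points by simp
qed

(* A crossing path from the first block stays inside the root, so the root is a
   connected pairing in its own right. *)
lemma root_connected: "connected_pairing (root P)"
proof (rule reachable_connected[OF first_block_root])
  fix b assume "b \<in> root P"
  then have "(first_block P, b) \<in> (cross_rel P)\<^sup>*" unfolding root_def by auto
  then show "(first_block P, b) \<in> (cross_rel (root P))\<^sup>*"
  proof (induction rule: rtrancl_induct)
    case base then show ?case by simp
  next
    case (step y z)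
    have "y \<in> P" "z \<in> P" using step(2) unfolding cross_rel_def by auto
    then have "y \<in> root P" "z \<in> root P" using step(1) rtrancl_into_rtrancl[OF step(1,2)]
      unfolding root_def by auto
    then have "(y, z) \<in> cross_rel (root P)" using step(2) unfolding cross_rel_def by auto
    then show ?case by (rule rtrancl_into_rtrancl[OF step(3)])
  qed
qed

(* A root block and a non-root block do not cross, so the root block lies inside,
   before, after, or around the non-root block. *)
lemma root_block_position:
  assumes b: "b \<in> P - root P" and k: "k \<in> root P"
  shows "(Min b < Min k \<and> Max k < Max b) \<or> Max k < Min b \<or> Max b < Min k \<or>
    (Min k < Min b \<and> Max b < Max k)"
proof -
  have kP: "k \<in> P" and bP: "b \<in> P" using k b root_subset by auto
  have nc: "\<not> crosses k b" "\<not> crosses b k"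
    using root_cross[OF k bP] root_cross'[OF k bP] b by auto
  have "k \<noteq> b" using k b by auto
  then have "Min k \<noteq> Min b" "Min k \<noteq> Max b" "Max k \<noteq> Min b" "Max k \<noteq> Max b"
    using P_disjoint[OF kP bP] card_2_Min_Max(5,6)[OF P_card_block[OF kP]]
      card_2_Min_Max(5,6)[OF P_card_block[OF bP]] by metis+
  moreover have "Min k < Max k" "Min b < Max b"
    using card_2_Min_Max(3) P_card_block kP bP by auto
  ultimately show ?thesis using nc unfolding crosses_def by linarith
qed

(* Otherwise
   some root block would be nested inside b, yet the root is reached from the
   first block (which is not inside b) through crossings, and a block inside b
   crosses only blocks inside b or crossing b. *)
lemma root_point_not_inside:
  assumes b: "b \<in> P - root P" and x: "x \<in> root_points P" and lt: "Min b < x" "x < Max b"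
  shows False
proof -
  define inside where "inside k \<longleftrightarrow> Min b < Min k \<and> Max k < Max b" for k
  have bP: "b \<in> P" using b by auto
  obtain kx where kx: "kx \<in> root P" "x \<in> kx" using x unfolding root_points_def by blast
  have "inside kx"
    using root_block_position[OF b kx(1)] card_2_mem[OF P_card_block kx(2)] kx(1) root_subset lt
    unfolding inside_def by fastforce
  moreover have "(first_block P, k) \<in> (cross_rel P)\<^sup>* \<Longrightarrow> \<not> inside k" for k
  proof (induction rule: rtrancl_induct)
    case base
    have "Min (first_block P) \<le> 1" using card_2_mem(1) P_card_block first_block_prop by blast
    moreover have "1 \<le> Min b"
      using P_block_range[OF bP card_2_Min_Max(5)[OF P_card_block[OF bP]]] by simp
    ultimately show ?case unfolding inside_def by auto
  next
    case (step y z)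
    have yz: "y \<in> P" "z \<in> P" "crosses y z" using step(2) unfolding cross_rel_def by auto
    have "y \<in> root P" using step(1) yz unfolding root_def by auto
    then have "Max y < Min b \<or> Max b < Min y \<or> (Min y < Min b \<and> Max b < Max y)"
      using root_block_position[OF b] step(3) unfolding inside_def by blast
    then show ?case
      using no_cross_around[OF P_card_block[OF yz(1)] P_card_block[OF yz(2)]] yz(3)
      unfolding inside_def by blast
  qed
  ultimately show False using kx(1) unfolding root_def by blast
qed

lemma rank_root_points_image: "rank (root_points P) ` root_points P = {..<2 * card (root P)}"
  using rank_image[OF finite_root_points] card_root_points by simp

(* A non-root block starts after at least one root point (namely 1) and after at
   most all 2|root| of them, so the gaps 0, ..., 2|root|-1 cover all non-root blocks. *)
lemma nonroot_rank: assumes b: "b \<in> P - root P"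
  shows "1 \<le> rank (root_points P) (Min b)" "rank (root_points P) (Min b) \<le> 2 * card (root P)"
proof -
  have bP: "b \<in> P" using b by auto
  have m: "Min b \<in> b" using card_2_Min_Max(5)[OF P_card_block[OF bP]] .
  have "Min b \<noteq> 1" using nonroot_not_root_point[OF b m] one_root_point by auto
  moreover have "1 \<le> Min b" using P_block_range[OF bP m] by simp
  ultimately have "1 < Min b" by simp
  then have "rank (root_points P) 1 < rank (root_points P) (Min b)"
    using rank_less[OF finite_root_points one_root_point] by blast
  then show "1 \<le> rank (root_points P) (Min b)" by simp
  show "rank (root_points P) (Min b) \<le> 2 * card (root P)"
    using rank_le_card[OF finite_root_points] card_root_points by metis
qed

lemma gap_subset: "gap P j \<subseteq> P - root P" unfolding gap_def by auto

lemma finite_gap: "finite (gap P j)" using gap_subset P_finite finite_subset by blast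

lemma nonroot_eq_gaps: "P - root P = (\<Union>j<2 * card (root P). gap P j)"
proof
  show "P - root P \<subseteq> (\<Union>j<2 * card (root P). gap P j)"
  proof
    fix b assume b: "b \<in> P - root P"
    define r where "r = rank (root_points P) (Min b)"
    have "1 \<le> r" "r \<le> 2 * card (root P)" using nonroot_rank[OF b] unfolding r_def by auto
    then have "r - 1 < 2 * card (root P)" "r = Suc (r - 1)" by auto
    then show "b \<in> (\<Union>j<2 * card (root P). gap P j)" using b unfolding gap_def r_def
      by blast
  qed
qed (auto simp: gap_def)

lemma gap_disjoint: "j \<noteq> l \<Longrightarrow> gap P j \<inter> gap P l = {}" unfolding gap_def
  by auto

lemma nonroot_before_iff:
  assumes x: "x \<in> root_points P \<or> x = 2*n+1" and b: "b \<in> P - root P"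
  shows "Max b < x \<longleftrightarrow> rank (root_points P) (Min b) \<le> rank (root_points P) x"
proof -
  have bP: "b \<in> P" using b by auto
  have mM: "Min b \<in> b" "Max b \<in> b" "Min b < Max b"
    using card_2_Min_Max(3,5,6)[OF P_card_block[OF bP]] by auto
  show ?thesis
  proof (cases "x = 2*n+1")
    case True
    have "Max b \<le> 2*n" using P_block_range[OF bP mM(2)] by simp
    moreover have "rank (root_points P) x = card (root_points P)" using True rank_end card_root_points
      by simp
    ultimately show ?thesis using True rank_le_card[OF finite_root_points] by simp
  next
    case False
    then have xA: "x \<in> root_points P" using x by simp
    show ?thesis
    proof
      assume "Max b < x"
      then have "Min b \<le> x" using mM by simp
      then show "rank (root_points P) (Min b) \<le> rank (root_points P) x"
        using rank_mono[OF finite_root_points] unfolding mono_def by blast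
    next
      assume le: "rank (root_points P) (Min b) \<le> rank (root_points P) x"
      show "Max b < x"
      proof (rule ccontr)
        assume "\<not> Max b < x"
        moreover have "Max b \<noteq> x" using nonroot_not_root_point[OF b mM(2)] xA by auto
        ultimately have "x < Max b" by simp
        then have "\<not> Min b < x" using root_point_not_inside[OF b xA] by blast
        moreover have "Min b \<noteq> x" using nonroot_not_root_point[OF b mM(1)] xA by auto
        ultimately have "x < Min b" by simp
        then have "rank (root_points P) x < rank (root_points P) (Min b)"
          using rank_less[OF finite_root_points xA] by blast
        then show False using le by simp
      qed
    qed
  qed
qed

lemma length_gap_sizes: "length (gap_sizes P) = 2 * card (root P)" unfolding gap_sizes_def by simp

lemma nth_gap_sizes: "j < 2 * card (root P) \<Longrightarrow> gap_sizes P ! j = card (gap P j)"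
  unfolding gap_sizes_def by simp

lemma sum_take_gap_sizes: assumes "r \<le> 2 * card (root P)"
  shows "sum_list (take r (gap_sizes P)) = (\<Sum>l<r. card (gap P l))"
proof -
  have "take r (gap_sizes P) = map (\<lambda>j. card (gap P j)) [0..<r]" unfolding gap_sizes_def
    using assms by (simp add: take_map)
  then show ?thesis by (simp add: sum_set_upt_conv_sum_list_nat[symmetric] atLeast0LessThan)
qed

lemma points_below_root_point:
  assumes x: "x \<in> root_points P \<or> x = 2*n+1"
  shows "{1..<x} = {y\<in>root_points P. y < x} \<union> \<Union>{b\<in>P - root P. Max b < x}"
proof
  show "{1..<x} \<subseteq> {y\<in>root_points P. y < x} \<union> \<Union>{b\<in>P - root P. Max b < x}"
  proof
    fix y assume y: "y \<in> {1..<x}"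
    then have "y \<in> \<Union>P" using P_Union x root_points_range by auto
    then obtain b where b: "b \<in> P" "y \<in> b" by blast
    show "y \<in> {y\<in>root_points P. y < x} \<union> \<Union>{b\<in>P - root P. Max b < x}"
    proof (cases "b \<in> root P")
      case True then show ?thesis using b y unfolding root_points_def by auto
    next
      case False
      then have bK: "b \<in> P - root P" using b by auto
      have "Min b \<le> y" using card_2_mem(1)[OF P_card_block[OF b(1)] b(2)] .
      then have "rank (root_points P) (Min b) \<le> rank (root_points P) x"
        using rank_mono[OF finite_root_points] y unfolding mono_def by auto
      then have "Max b < x" using nonroot_before_iff[OF x bK] by blast
      then show ?thesis using b bK by blast
    qed
  qed
  show "{y\<in>root_points P. y < x} \<union> \<Union>{b\<in>P - root P. Max b < x} \<subseteq> {1..<x}"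
    using root_points_range P_block_range card_2_mem(2)[OF P_card_block] by fastforce
qed

lemma nonroot_before_eq_gaps:
  assumes x: "x \<in> root_points P \<or> x = 2*n+1"
  shows "{b\<in>P - root P. Max b < x} = (\<Union>l<rank (root_points P) x. gap P l)"
proof
  show "{b\<in>P - root P. Max b < x} \<subseteq> (\<Union>l<rank (root_points P) x. gap P l)"
  proof
    fix b assume "b \<in> {b\<in>P - root P. Max b < x}"
    then have b: "b \<in> P - root P" "Max b < x" by auto
    have "rank (root_points P) (Min b) \<le> rank (root_points P) x"
      using nonroot_before_iff[OF x b(1)] b(2) by simp
    moreover have "1 \<le> rank (root_points P) (Min b)" using nonroot_rank[OF b(1)] by simp
    ultimately have "rank (root_points P) (Min b) - 1 < rank (root_points P) x"
      "rank (root_points P) (Min b) = Suc (rank (root_points P) (Min b) - 1)" by auto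
    then show "b \<in> (\<Union>l<rank (root_points P) x. gap P l)" using b unfolding gap_def
      by blast
  qed
  show "(\<Union>l<rank (root_points P) x. gap P l) \<subseteq> {b\<in>P - root P. Max b < x}"
    using nonroot_before_iff[OF x] unfolding gap_def by auto
qed

(* Counting the points below x: a root point of rank r sits at
   r + 1 + 2 (m_1 + ... + m_r), i.e. at slot (gap_sizes P) (r + 1). *)
lemma root_point_position:
  assumes x: "x \<in> root_points P \<or> x = 2*n+1"
  shows "x = rank (root_points P) x + 1 + 2 * sum_list (take (rank (root_points P) x) (gap_sizes P))"
proof -
  define r where "r = rank (root_points P) x"
  define Q where "Q = {b\<in>P - root P. Max b < x}"
  have finQ: "finite Q" using P_finite unfolding Q_def by auto
  have bfQ: "block_family Q" using P_block_family unfolding Q_def block_family_def by blast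
  have disj: "{y\<in>root_points P. y < x} \<inter> \<Union>Q = {}"
    using nonroot_not_root_point unfolding Q_def by blast
  have finUQ: "finite (\<Union>Q)"
    using finQ P_card_block card_2_Min_Max(1) unfolding Q_def by auto
  have "x - 1 = card {1..<x}" by simp
  also have "\<dots> = card {y\<in>root_points P. y < x} + card (\<Union>Q)"
    unfolding points_below_root_point[OF x] Q_def[symmetric]
    using disj finUQ finite_root_points by (intro card_Un_disjoint) auto
  also have "card {y\<in>root_points P. y < x} = r" unfolding r_def rank_def by simp
  also have "card (\<Union>Q) = 2 * card (\<Union>l<r. gap P l)"
    using card_Union_block_family[OF bfQ finQ] nonroot_before_eq_gaps[OF x]
    unfolding Q_def r_def by simp
  also have "card (\<Union>l<r. gap P l) = (\<Sum>l<r. card (gap P l))"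
    using finite_gap gap_disjoint by (intro card_UN_disjoint) auto
  also have "\<dots> = sum_list (take r (gap_sizes P))"
    using sum_take_gap_sizes[of r] rank_le_card[OF finite_root_points, of x] card_root_points
    unfolding r_def by simp
  finally have "x - 1 = r + 2 * sum_list (take r (gap_sizes P))" .
  moreover have "1 \<le> x" using x root_points_range by auto
  ultimately show ?thesis unfolding r_def by simp
qed

lemma slot_rank: assumes x: "x \<in> root_points P \<or> x = 2*n+1"
  shows "slot (gap_sizes P) (rank (root_points P) x + 1) = x"
  using root_point_position[OF x] unfolding slot_def by simp

lemma slot_of_rank:
  assumes k: "k \<le> 2 * card (root P)"
  obtains x where "x \<in> root_points P \<or> x = 2*n+1" "rank (root_points P) x = k"
    "slot (gap_sizes P) (k+1) = x"
proof (cases "k < 2 * card (root P)")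
  case True
  then obtain x where "x \<in> root_points P" "rank (root_points P) x = k"
    using rank_root_points_image by (metis imageE lessThan_iff)
  then show ?thesis using that slot_rank by metis
next
  case False
  then have "k = rank (root_points P) (2*n+1)" using k rank_end by simp
  then show ?thesis using that slot_rank[of "2*n+1"] by metis
qed

lemma sum_gap_sizes: "card (root P) + sum_list (gap_sizes P) = n"
proof -
  have "2*n+1 = 2 * card (root P) + 1 + 2 * sum_list (take (2 * card (root P)) (gap_sizes P))"
    using root_point_position[of "2*n+1"] rank_end by simp
  then show ?thesis using length_gap_sizes by simp
qed

lemma gap_range:
  assumes j: "j < 2 * card (root P)" and b: "b \<in> gap P j" and z: "z \<in> b"
  shows "slot (gap_sizes P) (j+1) < z \<and> z < slot (gap_sizes P) (j+2)"
proof -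
  have "j \<le> 2 * card (root P)" "j + 1 \<le> 2 * card (root P)" using j by simp_all
  obtain x0 where x0: "x0 \<in> root_points P \<or> x0 = 2*n+1" "rank (root_points P) x0 = j"
    "slot (gap_sizes P) (j+1) = x0"
    by (rule slot_of_rank[OF \<open>j \<le> 2 * card (root P)\<close>])
  obtain x1 where x1: "x1 \<in> root_points P \<or> x1 = 2*n+1" "rank (root_points P) x1 = j+1"
    "slot (gap_sizes P) (j+1+1) = x1"
    by (rule slot_of_rank[OF \<open>j + 1 \<le> 2 * card (root P)\<close>])
  have bK: "b \<in> P - root P" and rkb: "rank (root_points P) (Min b) = Suc j"
    using b unfolding gap_def by auto
  have bP: "b \<in> P" using bK by auto
  have x0A: "x0 \<in> root_points P" using x0(1,2) j rank_end by fastforce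
  have "x0 < Min b"
  proof (rule ccontr)
    assume "\<not> x0 < Min b"
    moreover have "Min b \<noteq> x0"
      using nonroot_not_root_point[OF bK card_2_Min_Max(5)[OF P_card_block[OF bP]]] x0A by auto
    ultimately have "Min b \<le> x0" by simp
    then have "rank (root_points P) (Min b) \<le> rank (root_points P) x0"
      using rank_mono[OF finite_root_points] unfolding mono_def by blast
    then show False using rkb x0 by simp
  qed
  moreover have "Max b < x1" using nonroot_before_iff[OF x1(1) bK] rkb x1(2) by simp
  moreover have "Min b \<le> z" "z \<le> Max b" using card_2_mem[OF P_card_block[OF bP] z] by auto
  ultimately show ?thesis using x0(3) x1(3) by simp
qed

lemma slot_gap_Suc: "j < 2 * card (root P) \<Longrightarrow>
    slot (gap_sizes P) (j+2) = slot (gap_sizes P) (j+1) + 1 + 2 * card (gap P j)"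
  using slot_Suc[of "gap_sizes P" j] length_gap_sizes nth_gap_sizes by simp

lemma gap_Union: assumes j: "j < 2 * card (root P)"
  shows "\<Union>(gap P j) = {slot (gap_sizes P) (j+1)<..<slot (gap_sizes P) (j+2)}"
proof (rule card_subset_eq)
  show "finite {slot (gap_sizes P) (j+1)<..<slot (gap_sizes P) (j+2)}" by simp
  show "\<Union>(gap P j) \<subseteq> {slot (gap_sizes P) (j+1)<..<slot (gap_sizes P) (j+2)}"
    using gap_range[OF j] by fastforce
  have "block_family (gap P j)" using P_block_family gap_subset unfolding block_family_def by blast
  then have "card (\<Union>(gap P j)) = 2 * card (gap P j)" using card_Union_block_family finite_gap
    by blast
  then show "card (\<Union>(gap P j)) = card {slot (gap_sizes P) (j+1)<..<slot (gap_sizes P) (j+2)}"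
    using slot_gap_Suc[OF j] by simp
qed

lemma map_fst_gap_pairings: "map fst (gap_pairings P) = gap_sizes P"
  unfolding gap_pairings_def gap_sizes_def by simp

lemma length_gap_pairings: "length (gap_pairings P) = 2 * card (root P)" unfolding gap_pairings_def
  by simp

lemma nth_gap_pairings:
  "j < 2 * card (root P) \<Longrightarrow> gap_pairings P ! j = (card (gap P j), gap_pairing P j)"
  unfolding gap_pairings_def by simp

lemma rank_Suc_mono: "mono (\<lambda>x. rank (root_points P) x + 1)"
  using rank_mono[OF finite_root_points] unfolding mono_def by simp

lemma rank_Suc_inj: "inj_on (\<lambda>x. rank (root_points P) x + 1) (root_points P)"
  using rank_inj[OF finite_root_points] unfolding inj_on_def by simp

(* The standardized root is a connected parity-reversing pairing: the relabelling
   is order-preserving (so it keeps crossings and connectivity) and root points sit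
   at slots of the same parity as their rank plus one. *)
lemma root_pairing_CPR: "root_pairing P \<in> CPR (card (root P))"
proof -
  have db: "block_family (root_pairing P)" unfolding root_pairing_def
    using rank_Suc_inj root_block_family unfolding root_points_def
    by (intro block_family_image) auto
  have "\<Union>(root_pairing P) = (\<lambda>x. rank (root_points P) x + 1) ` root_points P"
    unfolding root_pairing_def root_points_def by blast
  also have "\<dots> = Suc ` (rank (root_points P) ` root_points P)" by (simp add: image_image)
  also have "\<dots> = {1..2 * card (root P)}" using rank_root_points_image image_Suc_lessThan
    by simp
  finally have un: "\<Union>(root_pairing P) = {1..2 * card (root P)}" .
  have pr: "parity_reversing (root_pairing P)" unfolding root_pairing_def
  proof (rule parity_reversing_image[where e = True])
    show "parity_reversing (root P)" using P_parity_reversing root_subset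
      unfolding parity_reversing_def by blast
    fix x assume "x \<in> \<Union>(root P)"
    then have "slot (gap_sizes P) (rank (root_points P) x + 1) = x" using slot_rank
      unfolding root_points_def by blast
    then show "even (rank (root_points P) x + 1) = (even x = True)"
      using slot_parity[of "gap_sizes P" "rank (root_points P) x + 1"] by simp
  qed
  have cn: "connected_pairing (root_pairing P)" unfolding root_pairing_def
  proof (rule connected_pairing_image[OF root_connected])
    fix x y assume "x \<in> root P" "y \<in> root P"
    then show "crosses ((\<lambda>x. rank (root_points P) x + 1) ` x) ((\<lambda>x. rank (root_points P) x + 1) ` y) =
      crosses x y"
      using crosses_image[OF rank_Suc_mono rank_Suc_inj] P_card_block root_subset
        unfolding root_points_def by blast
  qed
  show ?thesis using db un pr cn unfolding CPR_def pairing_iff by simp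
qed

lemma gap_pairing_PR: assumes j: "j < 2 * card (root P)"
  shows "gap_pairing P j \<in> PR (card (gap P j))"
proof -
  define s where "s = slot (gap_sizes P) (Suc j)"
  define h where "h = (\<lambda>y::nat. y - s)"
  have U: "\<Union>(gap P j) = {s<..<s+1+2*card (gap P j)}" using gap_Union[OF j] slot_gap_Suc[OF j]
    unfolding s_def by simp
  have inj: "inj_on h (\<Union>(gap P j))" unfolding U h_def by (auto simp: inj_on_def)
  have dbG: "block_family (gap P j)" using P_block_family gap_subset unfolding block_family_def
    by blast
  have db: "block_family (image h ` gap P j)" by (rule block_family_image[OF dbG inj])
  have "\<Union>(image h ` gap P j) = h ` \<Union>(gap P j)" by blast
  also have "\<dots> = {1..2 * card (gap P j)}" unfolding U h_def by (rule image_minus_interval)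
  finally have un: "\<Union>(image h ` gap P j) = {1..2 * card (gap P j)}" .
  have pr: "parity_reversing (image h ` gap P j)"
  proof (rule parity_reversing_image[where e = "even s"])
    show "parity_reversing (gap P j)" using P_parity_reversing gap_subset
      unfolding parity_reversing_def by blast
    fix x assume "x \<in> \<Union>(gap P j)"
    then have "s \<le> x" unfolding U by simp
    then show "even (h x) = (even x = even s)" unfolding h_def by auto
  qed
  show ?thesis using db un pr unfolding PR_def pairing_iff gap_pairing_def h_def s_def by simp
qed

lemma gap_pairings_PR_lists: "gap_pairings P \<in> PR_lists (2 * card (root P)) (n - card (root P))"
  unfolding PR_lists_def
proof (intro CollectI conjI ballI)
  show "length (gap_pairings P) = 2 * card (root P)" by (rule length_gap_pairings)
  show "sum_list (map fst (gap_pairings P)) = n - card (root P)"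
    using map_fst_gap_pairings sum_gap_sizes by simp
  fix g assume "g \<in> set (gap_pairings P)"
  then obtain j where j: "j < 2 * card (root P)" "g = gap_pairings P ! j" using length_gap_pairings
    by (metis in_set_conv_nth)
  then show "snd g \<in> PR (fst g)" using nth_gap_pairings gap_pairing_PR by simp
qed

lemma decompose_decomp_data: "decompose P \<in> decomp_data n"
proof -
  have "card (root P) \<le> n" using sum_gap_sizes by linarith
  then show ?thesis unfolding decompose_def decomp_data_def
    using Pne root_pairing_CPR gap_pairings_PR_lists by simp
qed

(* Gluing the pieces of P back together returns P: the slots put the standardized
   root back onto the root points, and shifting each gap pairing up by its slot
   undoes the shift down. *)
lemma slots_root_pairing: "image (slot (gap_sizes P)) ` root_pairing P = root P"
proof -
  have "image (\<lambda>x. slot (gap_sizes P) (rank (root_points P) x + 1)) b = b" if b: "b \<in> root P" for b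
  proof -
    have "\<And>x. x \<in> b \<Longrightarrow> slot (gap_sizes P) (rank (root_points P) x + 1) = x"
      using slot_rank b unfolding root_points_def by blast
    then show ?thesis by simp
  qed
  then show ?thesis unfolding root_pairing_def image_image by simp
qed

lemma shift_gap_pairing:
  assumes j: "j < 2 * card (root P)"
  shows "image (\<lambda>y. y + slot (gap_sizes P) (Suc j)) ` gap_pairing P j = gap P j"
proof -
  have "image (\<lambda>y. y - slot (gap_sizes P) (Suc j) + slot (gap_sizes P) (Suc j)) b = b"
    if b: "b \<in> gap P j" for b
  proof -
    have "\<And>y. y \<in> b \<Longrightarrow> y - slot (gap_sizes P) (Suc j) + slot (gap_sizes P) (Suc j) = y"
      using gap_range[OF j b] by fastforce
    then show ?thesis by simp
  qed
  then show ?thesis unfolding gap_pairing_def image_image by simp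
qed

lemma glue_decompose: "glue (root_pairing P) (gap_pairings P) = P"
proof -
  have "glue (root_pairing P) (gap_pairings P) = root P \<union> (\<Union>j<2 * card (root P). gap P j)"
    unfolding glue_def map_fst_gap_pairings length_gap_pairings slots_root_pairing
    using shift_gap_pairing nth_gap_pairings by simp
  also have "\<dots> = P" using nonroot_eq_gaps root_subset by blast
  finally show ?thesis .
qed

end


definition shifted :: "(nat \<times> nat set set) list \<Rightarrow> nat \<Rightarrow> nat set set" where
  "shifted gs j = image (\<lambda>y. y + slot (map fst gs) (Suc j)) ` snd (gs!j)"

lemma glue_shifted: "glue C gs = image (slot (map fst gs)) ` C \<union> (\<Union>j<length gs. shifted gs j)"
  unfolding glue_def shifted_def by simp

context
  fixes i m C gs assumes CC: "C \<in> CPR i" and gs_lists: "gs \<in> PR_lists (2*i) m"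
begin

lemma length_gs: "length gs = 2*i" using gs_lists unfolding PR_lists_def by simp

lemma gs_nth_PR: "j < 2*i \<Longrightarrow> snd (gs!j) \<in> PR (map fst gs ! j)"
  using gs_lists length_gs unfolding PR_lists_def by (simp add: nth_mem)

lemma sum_gs: "sum_list (map fst gs) = m" using gs_lists unfolding PR_lists_def by simp

lemma C_props: "block_family C" "\<Union>C = {1..2*i}" "finite C" "card C = i"
  "parity_reversing C" "connected_pairing C"
  using CC pairing_finite[of i C] pairing_card[of i C] unfolding CPR_def pairing_iff by auto

lemma sum_nth_gs: "(\<Sum>j<2*i. map fst gs ! j) = m"
  using sum.list_conv_set_nth[of "map fst gs"] length_gs sum_gs by (simp add: atLeast0LessThan)

abbreviation "pos \<equiv> slot (map fst gs)"

lemma pos_last: "pos (2*i+1) = 2*(i+m)+1"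
  unfolding slot_def using length_gs sum_gs by simp

lemma pos_Suc: "j < 2*i \<Longrightarrow> pos (Suc (Suc j)) = pos (Suc j) + 1 + 2 * (map fst gs ! j)"
  using slot_Suc[of "map fst gs" j] length_gs by simp

lemma pos_le: "pos a \<le> pos b \<longleftrightarrow> a \<le> b"
  using slot_strict_mono strict_mono_less_eq by blast

lemma pos_lt: "pos a < pos b \<longleftrightarrow> a < b" using slot_strict_mono strict_mono_less by blast

lemma pos_inj_on: "inj_on pos X" using slot_inj by (metis inj_on_subset subset_UNIV)

lemma shifted_Union: assumes j: "j < 2*i"
  shows "\<Union>(shifted gs j) = {pos (Suc j)<..<pos (Suc (Suc j))}"
proof -
  have "\<Union>(snd (gs!j)) = {1..2 * (map fst gs ! j)}" using gs_nth_PR[OF j]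
    unfolding PR_def pairing_iff by simp
  then have "\<Union>(shifted gs j) = (\<lambda>y. y + pos (Suc j)) ` {1..2 * (map fst gs ! j)}"
    unfolding shifted_def by blast
  also have "\<dots> = {pos (Suc j)<..<pos (Suc (Suc j))}" using image_plus_interval pos_Suc[OF j] by simp
  finally show ?thesis .
qed

lemma shifted_props: assumes j: "j < 2*i"
  shows "block_family (shifted gs j)" "finite (shifted gs j)" "card (shifted gs j) = map fst gs ! j"
    "parity_reversing (shifted gs j)" "crossings (shifted gs j) = crossings (snd (gs!j))"
proof -
  have g: "pairing (map fst gs ! j) (snd (gs!j))" "parity_reversing (snd (gs!j))"
    using gs_nth_PR[OF j] unfolding PR_def by auto
  have dbg: "block_family (snd (gs!j))" using g unfolding pairing_iff by simp
  have fing: "finite (snd (gs!j))" using pairing_finite[OF g(1)] .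
  have inj: "inj_on (\<lambda>y. y + pos (Suc j)) (\<Union>(snd (gs!j)))" by (simp add: inj_on_def)
  have mono: "mono (\<lambda>y::nat. y + pos (Suc j))" by (simp add: mono_def)
  show "block_family (shifted gs j)" unfolding shifted_def by (rule block_family_image[OF dbg inj])
  show "finite (shifted gs j)" unfolding shifted_def using fing by simp
  have "inj (\<lambda>y::nat. y + pos (Suc j))" by (simp add: inj_def)
  then have "inj_on (image (\<lambda>y. y + pos (Suc j))) (snd (gs!j))" unfolding inj_on_def
    using inj_image_eq_iff by blast
  then show "card (shifted gs j) = map fst gs ! j" unfolding shifted_def
    using card_image pairing_card[OF g(1)] by metis
  show "parity_reversing (shifted gs j)" unfolding shifted_def
    by (rule parity_reversing_image[OF g(2), where e = "even (pos (Suc j))"]) simp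
  show "crossings (shifted gs j) = crossings (snd (gs!j))" unfolding shifted_def
    by (rule crossings_image[OF mono inj dbg fing])
qed

abbreviation "root_part \<equiv> image pos ` C"

lemma root_part_props: "block_family root_part" "finite root_part" "card root_part = i"
  "parity_reversing root_part" "crossings root_part = crossings C" "\<Union>root_part = pos ` {1..2*i}"
proof -
  have inj: "inj_on pos (\<Union>C)" using slot_inj by (metis inj_on_subset subset_UNIV)
  show "block_family root_part" by (rule block_family_image[OF C_props(1) inj])
  show "finite root_part" using C_props(3) by simp
  have "inj_on (image pos) C" using slot_inj by (auto simp: inj_on_def inj_image_eq_iff)
  then show "card root_part = i" using card_image C_props(4) by metis
  show "parity_reversing root_part"
    by (rule parity_reversing_image[OF C_props(5), where e = True]) (simp add: slot_parity)
  show "crossings root_part = crossings C" by (rule crossings_image[OF slot_mono inj C_props(1,3)])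
  show "\<Union>root_part = pos ` {1..2*i}" using C_props(2) by blast
qed

(* Slots and gap intervals are pairwise separated, so the pieces are disjoint and
   blocks of different pieces never cross. *)
lemma root_part_outside_gap: assumes j: "j < 2*i" and z: "z \<in> \<Union>root_part"
  shows "z \<notin> {pos (Suc j)<..<pos (Suc (Suc j))}"
proof -
  have "z \<in> pos ` {1..2*i}" using z unfolding root_part_props(6) .
  then obtain c where c: "c \<in> {1..2*i}" "z = pos c" by blast
  show ?thesis
  proof (cases "c \<le> Suc j")
    case True then have "pos c \<le> pos (Suc j)" using pos_le by blast
    then show ?thesis using c by simp
  next
    case False then have "pos (Suc (Suc j)) \<le> pos c" using pos_le by simp
    then show ?thesis using c by simp
  qed
qed

lemma shifted_outside_gap: assumes j: "j < 2*i" "l < 2*i" "j \<noteq> l"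
  and z: "z \<in> \<Union>(shifted gs l)"
  shows "z \<notin> {pos (Suc j)<..<pos (Suc (Suc j))}"
proof -
  have "z \<in> {pos (Suc l)<..<pos (Suc (Suc l))}" using z unfolding shifted_Union[OF j(2)] .
  then have z': "pos (Suc l) < z" "z < pos (Suc (Suc l))" by auto
  show ?thesis
  proof (cases "l < j")
    case True then have "pos (Suc (Suc l)) \<le> pos (Suc j)" using pos_le by simp
    then show ?thesis using z' by simp
  next
    case False then have "j < l" using j by simp
    then have "pos (Suc (Suc j)) \<le> pos (Suc l)" using pos_le by simp
    then show ?thesis using z' by simp
  qed
qed

abbreviation "gap_part \<equiv> (\<Union>j<2*i. shifted gs j)"

lemma glue_eq: "glue C gs = root_part \<union> gap_part" using glue_shifted length_gs by simp

lemma root_part_shifted_no_cross: assumes j: "j < 2*i" and x: "x \<in> root_part"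
  and y: "y \<in> shifted gs j"
  shows "\<not> crosses x y"
proof (rule no_cross_interval)
  show "card x = 2" by (rule block_family_card[OF root_part_props(1) x])
  show "card y = 2" by (rule block_family_card[OF shifted_props(1)[OF j] y])
  have "y \<subseteq> \<Union>(shifted gs j)" using y by blast
  then show "y \<subseteq> {pos (Suc j)<..<pos (Suc (Suc j))}" unfolding shifted_Union[OF j] .
  show "\<forall>z\<in>x. z \<notin> {pos (Suc j)<..<pos (Suc (Suc j))}"
  proof
    fix z assume "z \<in> x" then have "z \<in> \<Union>root_part" using x by blast
    then show "z \<notin> {pos (Suc j)<..<pos (Suc (Suc j))}" by (rule root_part_outside_gap[OF j])
  qed
qed

lemma shifted_shifted_no_cross: assumes j: "j < 2*i" "l < 2*i" "j \<noteq> l"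
  and x: "x \<in> shifted gs l" and y: "y \<in> shifted gs j"
  shows "\<not> crosses x y"
proof (rule no_cross_interval)
  show "card x = 2" by (rule block_family_card[OF shifted_props(1)[OF j(2)] x])
  show "card y = 2" by (rule block_family_card[OF shifted_props(1)[OF j(1)] y])
  have "y \<subseteq> \<Union>(shifted gs j)" using y by blast
  then show "y \<subseteq> {pos (Suc j)<..<pos (Suc (Suc j))}" unfolding shifted_Union[OF j(1)] .
  show "\<forall>z\<in>x. z \<notin> {pos (Suc j)<..<pos (Suc (Suc j))}"
  proof
    fix z assume "z \<in> x" then have "z \<in> \<Union>(shifted gs l)" using x by blast
    then show "z \<notin> {pos (Suc j)<..<pos (Suc (Suc j))}" by (rule shifted_outside_gap[OF j])
  qed
qed

lemma root_part_shifted_disjoint_points: assumes j: "j < 2*i"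
  shows "\<Union>root_part \<inter> \<Union>(shifted gs j) = {}"
proof (rule equals0I)
  fix z assume z: "z \<in> \<Union>root_part \<inter> \<Union>(shifted gs j)"
  have "z \<in> \<Union>(shifted gs j)" using z by (rule IntD2)
  then have "z \<in> {pos (Suc j)<..<pos (Suc (Suc j))}" unfolding shifted_Union[OF j] .
  moreover have "z \<in> \<Union>root_part" using z by (rule IntD1)
  ultimately show False using root_part_outside_gap[OF j] by blast
qed

lemma shifted_shifted_disjoint_points: assumes j: "j < 2*i" "l < 2*i" "j \<noteq> l"
  shows "\<Union>(shifted gs j) \<inter> \<Union>(shifted gs l) = {}"
proof (rule equals0I)
  fix z assume z: "z \<in> \<Union>(shifted gs j) \<inter> \<Union>(shifted gs l)"
  have "z \<in> \<Union>(shifted gs j)" using z by (rule IntD1)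
  then have "z \<in> {pos (Suc j)<..<pos (Suc (Suc j))}" unfolding shifted_Union[OF j(1)] .
  moreover have "z \<in> \<Union>(shifted gs l)" using z by (rule IntD2)
  ultimately show False using shifted_outside_gap[OF j] by blast
qed

lemma root_part_shifted_disjoint: assumes j: "j < 2*i" shows "root_part \<inter> shifted gs j = {}"
proof (rule equals0I)
  fix b assume b: "b \<in> root_part \<inter> shifted gs j"
  then obtain z where "z \<in> b" using block_family_nonempty_block[OF root_part_props(1)] by blast
  then have "z \<in> \<Union>root_part \<inter> \<Union>(shifted gs j)" using b by blast
  then show False using root_part_shifted_disjoint_points[OF j] by blast
qed

lemma shifted_shifted_disjoint: assumes j: "j < 2*i" "l < 2*i" "j \<noteq> l"
  shows "shifted gs j \<inter> shifted gs l = {}"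
proof (rule equals0I)
  fix b assume b: "b \<in> shifted gs j \<inter> shifted gs l"
  then obtain z where "z \<in> b" using block_family_nonempty_block[OF shifted_props(1)[OF j(1)]]
    by blast
  then have "z \<in> \<Union>(shifted gs j) \<inter> \<Union>(shifted gs l)" using b by blast
  then show False using shifted_shifted_disjoint_points[OF j] by blast
qed

lemma gap_part_block_family: "block_family gap_part"
  by (rule block_family_UN) (auto simp: shifted_props shifted_shifted_disjoint_points)

lemma finite_gap_part: "finite gap_part" using shifted_props(2) by simp

lemma glue_block_family: "block_family (glue C gs)"
  unfolding glue_eq
  by (rule block_family_Un[OF root_part_props(1) gap_part_block_family])
    (use root_part_shifted_disjoint_points in blast)

lemma finite_glue: "finite (glue C gs)" unfolding glue_eq using root_part_props(2) finite_gap_part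
  by simp

lemma card_glue: "card (glue C gs) = i + m"
proof -
  have "card gap_part = (\<Sum>j<2*i. card (shifted gs j))"
    by (rule card_UN_disjoint) (auto simp: shifted_props(2) shifted_shifted_disjoint)
  also have "\<dots> = m" using shifted_props(3) sum_nth_gs by simp
  finally have "card gap_part = m" .
  moreover have "root_part \<inter> gap_part = {}" using root_part_shifted_disjoint by blast
  ultimately show ?thesis unfolding glue_eq
    using card_Un_disjoint root_part_props(2,3) finite_gap_part by metis
qed

lemma glue_Union: "\<Union>(glue C gs) = {1..2*(i+m)}"
proof (rule card_subset_eq)
  show "finite {1..2*(i+m)}" by simp
  show "\<Union>(glue C gs) \<subseteq> {1..2*(i+m)}"
  proof
    fix z assume "z \<in> \<Union>(glue C gs)"
    then have "z \<in> \<Union>root_part \<or> (\<exists>j<2*i. z \<in> \<Union>(shifted gs j))"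
      unfolding glue_eq by blast
    then show "z \<in> {1..2*(i+m)}"
    proof
      assume "z \<in> \<Union>root_part"
      then have "z \<in> pos ` {1..2*i}" unfolding root_part_props(6) .
      then obtain c where c: "c \<in> {1..2*i}" "z = pos c" by blast
      have "pos 1 \<le> pos c" using c by (subst pos_le) simp
      moreover have "pos c < pos (2*i+1)" using c by (subst pos_lt) simp
      ultimately have "1 \<le> pos c" "pos c < pos (2*i+1)" by simp_all
      then show ?thesis using c pos_last by simp
    next
      assume "\<exists>j<2*i. z \<in> \<Union>(shifted gs j)"
      then obtain j where j: "j < 2*i" "z \<in> \<Union>(shifted gs j)" by blast
      then have "z \<in> {pos (Suc j)<..<pos (Suc (Suc j))}" unfolding shifted_Union[OF j(1)] by simp
      then have "pos (Suc j) < z" "z < pos (Suc (Suc j))" by auto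
      moreover have "pos (Suc (Suc j)) \<le> pos (2*i+1)" using j by (subst pos_le) simp
      ultimately show ?thesis using pos_last by simp
    qed
  qed
  show "card (\<Union>(glue C gs)) = card {1..2*(i+m)}"
    using card_Union_block_family[OF glue_block_family finite_glue] card_glue by simp
qed

lemma glue_PR: "glue C gs \<in> PR (i+m)"
proof -
  have "parity_reversing (glue C gs)" unfolding parity_reversing_def
  proof
    fix b assume "b \<in> glue C gs"
    then have "b \<in> root_part \<or> (\<exists>j<2*i. b \<in> shifted gs j)" unfolding glue_eq
      by blast
    then show "\<exists>x\<in>b. \<exists>y\<in>b. odd x \<and> even y"
    proof
      assume "b \<in> root_part" then show ?thesis using root_part_props(4)
        unfolding parity_reversing_def by blast
    next
      assume "\<exists>j<2*i. b \<in> shifted gs j"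
      then obtain j where "j < 2*i" "b \<in> shifted gs j" by blast
      then show ?thesis using shifted_props(4)[of j] unfolding parity_reversing_def by blast
    qed
  qed
  then show ?thesis using glue_block_family glue_Union unfolding PR_def pairing_iff by simp
qed

lemma crossings_glue: "crossings (glue C gs) = crossings C + (\<Sum>j<2*i. crossings (snd (gs!j)))"
proof -
  have "crossings (glue C gs) = crossings root_part + crossings gap_part"
    unfolding glue_eq
  proof (rule crossings_Un[OF root_part_props(2) finite_gap_part])
    show "root_part \<inter> gap_part = {}" using root_part_shifted_disjoint by blast
    fix x y assume "x \<in> root_part" "y \<in> gap_part"
    then obtain j where "j < 2*i" "y \<in> shifted gs j" by blast
    then show "\<not> crosses x y" using root_part_shifted_no_cross \<open>x \<in> root_part\<close>
      by blast
  qed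
  also have "crossings gap_part = (\<Sum>j<2*i. crossings (shifted gs j))"
  proof (rule crossings_UN)
    show "finite {..<2*i}" by simp
    fix j assume "j \<in> {..<2*i}" then show "finite (shifted gs j)" using shifted_props(2) by simp
  next
    fix j l assume "j \<in> {..<2*i}" "l \<in> {..<2*i}" "j \<noteq> l"
    then show "shifted gs j \<inter> shifted gs l = {}" using shifted_shifted_disjoint by simp
  next
    fix j l x y assume "j \<in> {..<2*i}" "l \<in> {..<2*i}" "j \<noteq> l" "x \<in> shifted gs j" "y \<in> shifted gs l"
    then show "\<not> crosses x y" using shifted_shifted_no_cross[of l j x y] by simp
  qed
  also have "\<dots> = (\<Sum>j<2*i. crossings (snd (gs!j)))" using shifted_props(5) by simp
  finally show ?thesis using root_part_props(5) by simp
qed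

lemma weight_glue: fixes \<phi> :: "nat \<Rightarrow> 'a::comm_ring_1"
  assumes "\<phi> 0 = 1" "\<And>a b. \<phi> (a + b) = \<phi> a * \<phi> b"
  shows "\<phi> (crossings (glue C gs)) = \<phi> (crossings C) * list_weight \<phi> gs"
proof -
  have "list_weight \<phi> gs = (\<Prod>j<2*i. \<phi> (crossings (snd (gs!j))))"
    unfolding list_weight_def
      using prod.list_conv_set_nth[of "map (\<lambda>g. \<phi> (crossings (snd g))) gs"] length_gs
    by (simp add: atLeast0LessThan)
  moreover have "\<phi> (\<Sum>j<2*i. crossings (snd (gs!j))) = (\<Prod>j<2*i. \<phi> (crossings (snd (gs!j))))"
    by (rule hom_sum[OF assms]) simp
  ultimately show ?thesis unfolding crossings_glue using assms(2) by simp
qed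

context assumes ipos: "1 \<le> i"
begin

(* With i >= 1 the glued pairing is nonempty, and its first block is the copy of
   the first block of C, since slot 1 = 1. *)
lemma glue_nonempty: "glue C gs \<noteq> {}"
  using C_props(4) ipos unfolding glue_eq by auto

lemma first_C_block: "\<exists>c1\<in>C. 1 \<in> c1" using C_props(2) ipos by auto

lemma first_block_glue: assumes c1: "c1 \<in> C" "1 \<in> c1"
  shows "first_block (glue C gs) = pos ` c1"
proof -
  have a: "first_block (glue C gs) \<in> glue C gs" "1 \<in> first_block (glue C gs)"
    using first_block_prop[OF glue_PR glue_nonempty] by auto
  have b1: "pos ` c1 \<in> glue C gs" using c1 unfolding glue_eq by blast
  have b2: "1 \<in> pos ` c1" using image_eqI[of 1 pos 1 c1] c1(2) by simp
  show ?thesis using P_disjoint[OF glue_PR glue_nonempty a(1) b1 a(2) b2] .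
qed

(* The root of the glued pairing is exactly the copy of C: it contains the copy of
   C since C is connected, and it cannot leave it since that copy crosses no block
   of the gaps. *)
lemma root_glue_subset: "root (glue C gs) \<subseteq> root_part"
proof
  obtain c1 where c1: "c1 \<in> C" "1 \<in> c1" using first_C_block by blast
  fix b assume "b \<in> root (glue C gs)"
  then have "(pos ` c1, b) \<in> (cross_rel (glue C gs))\<^sup>*"
    unfolding root_def first_block_glue[OF c1] by auto
  then show "b \<in> root_part"
  proof (induction rule: rtrancl_induct)
    case base then show ?case using c1 by blast
  next
    case (step y z)
    have z: "z \<in> glue C gs" "crosses y z" using step(2) unfolding cross_rel_def by auto
    show ?case
    proof (rule ccontr)
      assume "z \<notin> root_part"
      then obtain j where "j < 2*i" "z \<in> shifted gs j" using z(1) unfolding glue_eq by blast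
      then show False using root_part_shifted_no_cross step(3) z(2) by blast
    qed
  qed
qed

lemma root_part_subset_root: "root_part \<subseteq> root (glue C gs)"
proof
  obtain c1 where c1: "c1 \<in> C" "1 \<in> c1" using first_C_block by blast
  have sub: "root_part \<subseteq> glue C gs" unfolding glue_eq by blast
  fix b assume "b \<in> root_part"
  then obtain c where c: "c \<in> C" "b = pos ` c" by blast
  have "(c1, c) \<in> (cross_rel C)\<^sup>*" by (rule connected_reachable[OF C_props(6) c1(1) c(1)])
  then have "(pos ` c1, pos ` c) \<in> (cross_rel (glue C gs))\<^sup>*"
  proof (rule rtrancl_map)
    fix x y assume "(x, y) \<in> cross_rel C"
    then have xy: "x \<in> C" "y \<in> C" "crosses x y" unfolding cross_rel_def by auto
    have "crosses (pos ` x) (pos ` y) = crosses x y"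
      by (rule crosses_image[OF slot_mono pos_inj_on[of UNIV]])
        (simp_all add: block_family_card[OF C_props(1)] xy)
    then show "(pos ` x, pos ` y) \<in> cross_rel (glue C gs)" using xy sub unfolding cross_rel_def
      by blast
  qed
  then show "b \<in> root (glue C gs)" unfolding root_def first_block_glue[OF c1] using c sub
    by blast
qed

lemma root_glue: "root (glue C gs) = root_part"
  using root_glue_subset root_part_subset_root by blast

lemma root_points_glue: "root_points (glue C gs) = pos ` {1..2*i}"
  unfolding root_points_def root_glue using root_part_props(6) .

lemma rank_f: assumes c: "c \<in> {1..2*i}" shows "rank (root_points (glue C gs)) (pos c) = c - 1"
proof -
  have "{y \<in> pos ` {1..2*i}. y < pos c} = pos ` {1..<c}"
  proof
    show "{y \<in> pos ` {1..2*i}. y < pos c} \<subseteq> pos ` {1..<c}" using pos_lt by auto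
    show "pos ` {1..<c} \<subseteq> {y \<in> pos ` {1..2*i}. y < pos c}" using c pos_lt by auto
  qed
  then have "rank (root_points (glue C gs)) (pos c) = card (pos ` {1..<c})"
    unfolding rank_def root_points_glue by simp
  also have "\<dots> = c - 1" using card_image[OF pos_inj_on] by simp
  finally show ?thesis .
qed

lemma rank_in_gap: assumes j: "j < 2*i" and z: "pos (Suc j) < z" "z < pos (Suc (Suc j))"
  shows "rank (root_points (glue C gs)) z = Suc j"
proof -
  have "{y \<in> pos ` {1..2*i}. y < z} = pos ` {1..Suc j}"
  proof
    show "{y \<in> pos ` {1..2*i}. y < z} \<subseteq> pos ` {1..Suc j}"
    proof
      fix y assume "y \<in> {y \<in> pos ` {1..2*i}. y < z}"
      then obtain c where c: "c \<in> {1..2*i}" "y = pos c" "pos c < z" by auto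
      have "c \<le> Suc j"
      proof (rule ccontr)
        assume "\<not> c \<le> Suc j"
        then have "pos (Suc (Suc j)) \<le> pos c" by (subst pos_le) simp
        then show False using c z by simp
      qed
      then show "y \<in> pos ` {1..Suc j}" using c by auto
    qed
    show "pos ` {1..Suc j} \<subseteq> {y \<in> pos ` {1..2*i}. y < z}"
    proof
      fix y assume "y \<in> pos ` {1..Suc j}"
      then obtain c where c: "c \<in> {1..Suc j}" "y = pos c" by auto
      have "pos c \<le> pos (Suc j)" using c by (subst pos_le) simp
      then show "y \<in> {y \<in> pos ` {1..2*i}. y < z}" using c z j by auto
    qed
  qed
  then have "rank (root_points (glue C gs)) z = card (pos ` {1..Suc j})"
    unfolding rank_def root_points_glue by simp
  also have "\<dots> = Suc j" using card_image[OF pos_inj_on] by simp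
  finally show ?thesis .
qed

lemma root_pairing_glue: "root_pairing (glue C gs) = C"
proof -
  have "root_pairing (glue C gs) = (\<lambda>b. (\<lambda>c. rank (root_points (glue C gs)) (pos c) + 1) ` b) ` C"
    unfolding root_pairing_def root_glue by (simp add: image_image)
  also have "\<dots> = (\<lambda>b. b) ` C"
  proof (rule image_cong[OF refl])
    fix b assume b: "b \<in> C"
    have "\<And>c. c \<in> b \<Longrightarrow> rank (root_points (glue C gs)) (pos c) + 1 = c"
    proof -
      fix c assume "c \<in> b"
      then have "c \<in> {1..2*i}" using b C_props(2) by blast
      then show "rank (root_points (glue C gs)) (pos c) + 1 = c" using rank_f by simp
    qed
    then show "(\<lambda>c. rank (root_points (glue C gs)) (pos c) + 1) ` b = b" by simp
  qed
  finally show ?thesis by simp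
qed

lemma card_root_glue: "card (root (glue C gs)) = i" using root_glue root_part_props(3) by simp

lemma gap_glue: assumes j: "j < 2*i" shows "gap (glue C gs) j = shifted gs j"
proof -
  have kh: "gap_part \<inter> root_part = {}" using root_part_shifted_disjoint by blast
  have diff: "glue C gs - root (glue C gs) = gap_part"
  proof -
    have "glue C gs - root (glue C gs) = glue C gs - root_part" by (subst root_glue) (rule refl)
    also have "\<dots> = (root_part \<union> gap_part) - root_part" by (subst glue_eq) (rule refl)
    also have "\<dots> = gap_part" by (simp add: Un_Diff Diff_triv[OF kh])
    finally show ?thesis .
  qed
  have rkH: "rank (root_points (glue C gs)) (Min b) = Suc l"
    if l: "l < 2*i" and b: "b \<in> shifted gs l" for l b
  proof -
    have "Min b \<in> b"
      using card_2_Min_Max(5)[OF block_family_card[OF shifted_props(1)[OF l] b]] .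
    then have "Min b \<in> \<Union>(shifted gs l)" using b by blast
    then have "Min b \<in> {pos (Suc l)<..<pos (Suc (Suc l))}" unfolding shifted_Union[OF l] .
    then show ?thesis using rank_in_gap[OF l] by simp
  qed
  show ?thesis
  proof
    show "gap (glue C gs) j \<subseteq> shifted gs j"
    proof
      fix b assume "b \<in> gap (glue C gs) j"
      then have b: "b \<in> gap_part" "rank (root_points (glue C gs)) (Min b) = Suc j"
        unfolding gap_def diff by auto
      then obtain l where l: "l < 2*i" "b \<in> shifted gs l" by blast
      then have "l = j" using rkH b(2) by simp
      then show "b \<in> shifted gs j" using l by simp
    qed
    show "shifted gs j \<subseteq> gap (glue C gs) j"
    proof
      fix b assume b: "b \<in> shifted gs j"
      then have "b \<in> gap_part" using j by blast
      then show "b \<in> gap (glue C gs) j" unfolding gap_def diff using rkH[OF j b] by simp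
    qed
  qed
qed

lemma gap_sizes_glue: "gap_sizes (glue C gs) = map fst gs"
proof (rule nth_equalityI)
  show "length (gap_sizes (glue C gs)) = length (map fst gs)" unfolding gap_sizes_def card_root_glue
    using length_gs by simp
  fix j assume "j < length (gap_sizes (glue C gs))"
  then have j: "j < 2*i" unfolding gap_sizes_def card_root_glue by simp
  show "gap_sizes (glue C gs) ! j = map fst gs ! j"
    unfolding gap_sizes_def card_root_glue using j gap_glue[OF j] shifted_props(3)[OF j] by simp
qed

lemma gap_pairings_glue: "gap_pairings (glue C gs) = gs"
proof (rule nth_equalityI)
  show "length (gap_pairings (glue C gs)) = length gs" unfolding gap_pairings_def card_root_glue
    using length_gs by simp
  fix j assume "j < length (gap_pairings (glue C gs))"
  then have j: "j < 2*i" unfolding gap_pairings_def card_root_glue by simp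
  have e: "image (\<lambda>y. y - pos (Suc j)) ` shifted gs j = snd (gs!j)"
    unfolding shifted_def by (simp add: image_image)
  have "gap_pairings (glue C gs) ! j = (card (shifted gs j), image (\<lambda>y. y - pos (Suc j)) ` shifted gs j)"
    unfolding gap_pairings_def gap_pairing_def card_root_glue gap_sizes_glue using j gap_glue[OF j]
    by simp
  also have "\<dots> = (fst (gs!j), snd (gs!j))" using shifted_props(3)[OF j] e j length_gs by simp
  finally show "gap_pairings (glue C gs) ! j = gs ! j" by simp
qed

lemma decompose_glue: "decompose (glue C gs) = (i, C, gs)"
  unfolding decompose_def using glue_nonempty card_root_glue root_pairing_glue gap_pairings_glue
  by simp

end

end


lemma CPR_0: "CPR 0 = {{}}"
  by (auto simp: CPR_def pairing_0 parity_reversing_def connected_pairing_def)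

lemma glue_Nil: "glue {} [] = {}" unfolding glue_def by simp

lemma decompose_empty: "decompose {} = (0, {}, [])" unfolding decompose_def by simp

lemma glue_inverse:
  assumes "(i, C, gs) \<in> decomp_data n"
  shows "glue C gs \<in> PR n" "decompose (glue C gs) = (i, C, gs)"
proof -
  have a: "i \<le> n" "C \<in> CPR i" "gs \<in> PR_lists (2*i) (n - i)"
    using assms unfolding decomp_data_def by auto
  show "glue C gs \<in> PR n" using glue_PR[OF a(2,3)] a(1) by simp
  show "decompose (glue C gs) = (i, C, gs)"
  proof (cases "1 \<le> i")
    case True then show ?thesis using decompose_glue[OF a(2,3) True] by simp
  next
    case False
    then have "i = 0" by simp
    then have "i = 0" "gs = []" "C = {}" using a(2,3) CPR_0 unfolding PR_lists_def by auto
    then show ?thesis using glue_Nil decompose_empty by simp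
  qed
qed

lemma decompose_inverse:
  assumes P: "P \<in> PR n"
  shows "decompose P \<in> decomp_data n" "(\<lambda>(i, C, gs). glue C gs) (decompose P) = P"
proof -
  have "decompose P \<in> decomp_data n \<and> (\<lambda>(i, C, gs). glue C gs) (decompose P) = P"
  proof (cases "P = {}")
    case True
    then have "n = 0" using P unfolding PR_def pairing_def by auto
    then show ?thesis
      using True CPR_0 decompose_empty glue_Nil unfolding decomp_data_def PR_lists_def by simp
  next
    case False
    then show ?thesis using decompose_decomp_data[OF P False] glue_decompose[OF P False]
      unfolding decompose_def by simp
  qed
  then show "decompose P \<in> decomp_data n" "(\<lambda>(i, C, gs). glue C gs) (decompose P) = P"
    by simp_all
qed

lemma PR_decomposition:
  fixes \<phi> :: "nat \<Rightarrow> 'a::comm_ring_1"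
  assumes phi0: "\<phi> 0 = 1" and phi_add: "\<And>a b. \<phi> (a + b) = \<phi> a * \<phi> b"
  shows "(\<Sum>P\<in>PR n. \<phi> (crossings P)) =
    (\<Sum>(i, C, gs)\<in>decomp_data n. \<phi> (crossings C) * list_weight \<phi> gs)"
proof (rule sym, rule sum.reindex_bij_witness[where j = "\<lambda>(i, C, gs). glue C gs" and i = decompose])
  fix a assume "a \<in> decomp_data n"
  moreover obtain i C gs where a: "a = (i, C, gs)" by (cases a)
  ultimately have data: "(i, C, gs) \<in> decomp_data n" by simp
  then have CG: "C \<in> CPR i" "gs \<in> PR_lists (2*i) (n - i)" unfolding decomp_data_def by auto
  show "decompose ((\<lambda>(i, C, gs). glue C gs) a) = a" using glue_inverse(2)[OF data] a by simp
  show "(\<lambda>(i, C, gs). glue C gs) a \<in> PR n" using glue_inverse(1)[OF data] a by simp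
  show "\<phi> (crossings ((\<lambda>(i, C, gs). glue C gs) a)) =
      (\<lambda>(i, C, gs). \<phi> (crossings C) * list_weight \<phi> gs) a"
    using weight_glue[OF CG phi0 phi_add] a by simp
qed (use decompose_inverse in auto)

lemma b_n_eq_card: "b_n n = card (CPR n)"
  using CPR_0 by (cases "n = 0") (simp_all add: b_n_def CPR_def)

lemma sum_indicator_card:
  assumes "finite A"
  shows "(\<Sum>P\<in>A. if k = g P then (1::'a::comm_ring_1) else 0) = of_nat (card {P\<in>A. g P = k})"
proof -
  have "(\<Sum>P\<in>A. if k = g P then (1::'a) else 0) = (\<Sum>P\<in>{P\<in>A. k = g P}. 1)"
    using assms by (subst sum.If_cases) (simp_all add: Int_def)
  moreover have "{x\<in>A. k = g x} = {P\<in>A. g P = k}" by auto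
  ultimately show ?thesis by simp
qed

lemma F_fps_eq: "F_fps = PR_series (\<lambda>k. 1)"
  by (rule fps_ext) (simp add: F_fps_def PR_series_nth card_PR)

lemma B_fps_eq: "B_fps = CPR_series (\<lambda>k. 1)"
  by (rule fps_ext) (simp add: B_fps_def CPR_series_nth b_n_eq_card)

lemma R_fps_eq: "R_fps = PR_series (\<lambda>k. fps_X ^ k)"
proof (rule fps_ext)
  fix n
  show "R_fps $ n = PR_series (\<lambda>k. fps_X ^ k) $ n"
  proof (rule fps_ext)
    fix k
    have "PR_series (\<lambda>k. fps_X ^ k) $ n $ k = (\<Sum>P\<in>PR n. if k = crossings P then (1::int) else 0)"
      by (simp add: PR_series_nth fps_sum_nth)
    also have "\<dots> = int (card {P\<in>PR n. crossings P = k})"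
      by (rule sum_indicator_card[OF finite_PR])
    also have "\<dots> = R_fps $ n $ k" by (simp add: R_fps_def r_nk_def PR_def)
    finally show "R_fps $ n $ k = PR_series (\<lambda>k. fps_X ^ k) $ n $ k" by simp
  qed
qed

lemma B2_fps_eq: "B2_fps = CPR_series (\<lambda>k. fps_X ^ k)"
proof (rule fps_ext)
  fix n
  show "B2_fps $ n = CPR_series (\<lambda>k. fps_X ^ k) $ n"
  proof (rule fps_ext)
    fix k
    have "CPR_series (\<lambda>k. fps_X ^ k) $ n $ k = (\<Sum>P\<in>CPR n. if k = crossings P then (1::int) else 0)"
      by (simp add: CPR_series_nth fps_sum_nth)
    also have "\<dots> = int (card {P\<in>CPR n. crossings P = k})"
      by (rule sum_indicator_card[OF finite_CPR])
    also have "\<dots> = B2_fps $ n $ k"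
    proof (cases "n = 0")
      case True
      have "crossings {} = 0" by (simp add: crossings_def)
      have "{P\<in>CPR n. crossings P = k} = (if k = 0 then {{}} else {})"
        using True \<open>crossings {} = 0\<close> CPR_0 by auto
      then show ?thesis using True by (simp add: B2_fps_def b_nk_def)
    next
      case False then show ?thesis by (simp add: B2_fps_def b_nk_def CPR_def)
    qed
    finally show "B2_fps $ n $ k = CPR_series (\<lambda>k. fps_X ^ k) $ n $ k" by simp
  qed
qed

theorem mainTheorem5:
  shows "F_fps = B_fps oo (fps_X * F_fps ^ 2) \<and> R_fps = B2_fps oo (fps_X * R_fps ^ 2)"
proof
  show "F_fps = B_fps oo (fps_X * F_fps ^ 2)"
    unfolding F_fps_eq B_fps_eq
    by (rule functional_equation_from_decomposition) (rule PR_decomposition, simp_all)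
  show "R_fps = B2_fps oo (fps_X * R_fps ^ 2)"
    unfolding R_fps_eq B2_fps_eq
    by (rule functional_equation_from_decomposition)
      (rule PR_decomposition, simp_all add: power_add)
qed

end
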